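(* The map $X\mapsto \mathfrak p^{-1}(X)\cap\Phi^+$ is a bijection from the set of admissible subsets of $\Psi^+$ (type $\mathrm{F}_4$) onto the set of $\sigma$-invariant admissible subsets of $\Phi^+$ (type $\mathrm{E}_6$). Under the action of $W(\mathrm{F}_4)$, the admissible subsets of $\Psi^+$ fall into exactly six orbits, with representatives (I) $\emptyset$; (II) $\{\epsilon_4-\epsilon_3\}$; (III) $\{\tfrac12(\epsilon_1-\epsilon_2-\epsilon_3-\epsilon_4)\}$; (IV) $\{\epsilon_3-\epsilon_2,\epsilon_3+\epsilon_2\}$; (V) $\{\tfrac12(\epsilon_1-\epsilon_2-\epsilon_3-\epsilon_4),\ \epsilon_3-\epsilon_2,\ \epsilon_4+\epsilon_1\}$; (VI) $\{\epsilon_3-\epsilon_2,\epsilon_3+\epsilon_2,\epsilon_4+\epsilon_1,\epsilon_4-\epsilon_1\}$, and these orbits have cardinalities $1,12,12,18,36,3$ respectively.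
   Context: Let $\epsilon_1,\dots,\epsilon_4$ be the standard orthonormal basis of $\mathbb R^4$, and $\beta_1=\frac12(\epsilon_1-\epsilon_2-\epsilon_3-\epsilon_4)$, $\beta_2=\epsilon_2$, $\beta_3=\epsilon_3-\epsilon_2$, $\beta_4=\epsilon_4-\epsilon_3$. Let $\Psi=\{\pm\epsilon_i\}\cup\{\pm\epsilon_i\pm\epsilon_j: i<j\}\cup\{\frac12(\pm\epsilon_1\pm\epsilon_2\pm\epsilon_3\pm\epsilon_4)\}$, the root system of type $\mathrm{F}_4$ with simple roots $\beta_1,\dots,\beta_4$, and $\Psi^+$ the $24$ roots that are nonnegative combinations of the $\beta_i$. A root $\beta$ and $-\beta$ are identified when writing sets of positive roots (e.g. $\epsilon_4-\epsilon_1$ stands for the positive root $\epsilon_1-\epsilon_4$). $W(\mathrm{F}_4)$ is the reflection group of $\Psi$; it acts on $\Psi^+$ by $w\cdot\beta=$ the element of $\{wβ,-w\beta\}\cap\Psi^+$, and on subsets of $\Psi^+$ elementwise. Let $\Phi$ be the root system of type $\mathrm{E}_6$ in a $6$-dimensional Euclidean space $V$ with simple roots $\alpha_1,\dots,\alpha_6$ (all of squared length $2$), where $(\alpha_i,\alpha_j)=-1$ if $\{i,j\}$ is one of $\{1,3\},\{3,4\},\{4,5\},\{5,6\},\{2,4\}$ and $0$ for other $i\neq j$; $\Phi^+$ is its set of positive roots. A subset $B\subseteq\Phi^+$ is admissible if its elements are mutually orthogonal and whenever $\gamma_1,\gamma_2,\gamma_3\in B$ are distinct and $\gamma\in\Phi$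 satisfies $(\gamma,\gamma_k)\in\{\pm1\}$ for $k=1,2,3$, the positive root among $\pm\bigl(2\gamma-\sum_{k=1}^3(\gamma,\gamma_k)\gamma_k\bigr)$ lies in $B$. Let $\sigma$ be the linear isometry of $V$ with $\sigma(\alpha_1)=\alpha_6$, $\sigma(\alpha_6)=\alpha_1$, $\sigma(\alpha_3)=\alpha_5$, $\sigma(\alpha_5)=\alpha_3$, $\sigma(\alpha_2)=\alpha_2$, $\sigma(\alpha_4)=\alpha_4$. Let $\mathfrak p:V\to\mathbb R^4$ be the linear map with $\mathfrak p(\alpha_1)=\mathfrak p(\alpha_6)=\beta_1$, $\mathfrak p(\alpha_3)=\mathfrak p(\alpha_5)=\beta_2$, $\mathfrak p(\alpha_4)=\beta_3$, $\mathfrak p(\alpha_2)=\beta_4$. A set $X\subseteq\Psi^+$ of mutually orthogonal roots is called admissible (type $\mathrm{F}_4$) if $\mathfrak p^{-1}(X)\cap\Phi^+$ is an admissible subset of $\Phi^+$. *)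

theory Defs
  imports Complex_Main
begin

text \<open>For R^4 the coordinates
  1..4 are the coefficients w.r.t. eps_1..eps_4; for the E6 space V the
  coordinates 1..6 are the coefficients w.r.t. the simple roots alpha_1..alpha_6
  (V is identified with R^6 via this basis, with the inner product given by the
  Gram matrix of the alpha_i).  All vectors occurring are zero outside these
  index ranges.\<close>

type_synonym vec = "nat \<Rightarrow> real"

definition vadd :: "vec \<Rightarrow> vec \<Rightarrow> vec" where "vadd u v = (\<lambda>k. u k + v k)"
definition vsub :: "vec \<Rightarrow> vec \<Rightarrow> vec" where "vsub u v = (\<lambda>k. u k - v k)"
definition vneg :: "vec \<Rightarrow> vec" where "vneg v = (\<lambda>k. - v k)"
definition vsc :: "real \<Rightarrow> vec \<Rightarrow> vec" where "vsc a v = (\<lambda>k. a * v k)"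

definition eps :: "nat \<Rightarrow> vec" where "eps i = (\<lambda>k. if k = i then 1 else 0)"

definition ip4 :: "vec \<Rightarrow> vec \<Rightarrow> real" where "ip4 u v = (\<Sum>k\<in>{1..4}. u k * v k)"

definition beta1 :: vec where
  "beta1 = vsc (1/2) (vsub (vsub (vsub (eps 1) (eps 2)) (eps 3)) (eps 4))"
definition beta2 :: vec where "beta2 = eps 2"
definition beta3 :: vec where "beta3 = vsub (eps 3) (eps 2)"
definition beta4 :: vec where "beta4 = vsub (eps 4) (eps 3)"

definition Psi :: "vec set" where
  "Psi = {vsc s (eps i) | s i. s \<in> {1, -1} \<and> i \<in> {1..4}}
       \<union> {vadd (vsc s (eps i)) (vsc t (eps j)) | s t i j.
              s \<in> {1, -1} \<and> t \<in> {1, -1} \<and> 1 \<le> i \<and> i < j \<and> j \<le> 4}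
       \<union> {(\<lambda>k. if k \<in> {1..4} then s k / 2 else 0) | s :: nat \<Rightarrow> real.
              \<forall>k\<in>{1..4}. s k \<in> {1, -1}}"

definition PsiPlus :: "vec set" where
  "PsiPlus = {r \<in> Psi. \<exists>a b c d. a \<ge> 0 \<and> b \<ge> 0 \<and> c \<ge> 0 \<and> d \<ge> 0 \<and>
      r = vadd (vsc a beta1) (vadd (vsc b beta2) (vadd (vsc c beta3) (vsc d beta4)))}"

text \<open>The positive representative of +-v (identification of beta with -beta).\<close>
definition posF :: "vec \<Rightarrow> vec" where
  "posF v = (if v \<in> PsiPlus then v else vneg v)"

definition refl4 :: "vec \<Rightarrow> vec \<Rightarrow> vec" where
  "refl4 r v = vsub v (vsc (2 * ip4 v r / ip4 r r) r)"

text \<open>The Weyl group W(F4): the group generated by the reflections in the roots of Psi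
  (reflections are involutions, so the generated monoid is the generated group).\<close>
inductive_set WF4 :: "(vec \<Rightarrow> vec) set" where
  WF4_id: "id \<in> WF4"
| WF4_refl: "w \<in> WF4 \<Longrightarrow> r \<in> Psi \<Longrightarrow> refl4 r \<circ> w \<in> WF4"

definition actF :: "(vec \<Rightarrow> vec) \<Rightarrow> vec \<Rightarrow> vec" where
  "actF w b = posF (w b)"

definition actFset :: "(vec \<Rightarrow> vec) \<Rightarrow> vec set \<Rightarrow> vec set" where
  "actFset w X = actF w ` X"

definition orbitF :: "vec set \<Rightarrow> vec set set" where
  "orbitF X = {actFset w X | w. w \<in> WF4}"

definition alphaE :: "nat \<Rightarrow> vec" where "alphaE i = (\<lambda>k. if k = i then 1 else 0)"

definition cartanE :: "nat \<Rightarrow> nat \<Rightarrow> real" where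
  "cartanE i j = (if i = j then 2
     else if {i, j} \<in> {{1,3}, {3,4}, {4,5}, {5,6}, {2,4}} then -1 else 0)"

definition ipE :: "vec \<Rightarrow> vec \<Rightarrow> real" where
  "ipE u v = (\<Sum>i\<in>{1..6}. \<Sum>j\<in>{1..6}. u i * v j * cartanE i j)"

definition reflE :: "vec \<Rightarrow> vec \<Rightarrow> vec" where
  "reflE a v = vsub v (vsc (2 * ipE v a / ipE a a) a)"

inductive_set PhiE :: "vec set" where
  PhiE_simple: "i \<in> {1..6} \<Longrightarrow> alphaE i \<in> PhiE"
| PhiE_refl: "v \<in> PhiE \<Longrightarrow> i \<in> {1..6} \<Longrightarrow> reflE (alphaE i) v \<in> PhiE"

definition PhiPlus :: "vec set" where
  "PhiPlus = {v \<in> PhiE. \<forall>i. v i \<ge> 0}"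

definition admE :: "vec set \<Rightarrow> bool" where
  "admE B \<longleftrightarrow> B \<subseteq> PhiPlus
     \<and> (\<forall>g1\<in>B. \<forall>g2\<in>B. g1 \<noteq> g2 \<longrightarrow> ipE g1 g2 = 0)
     \<and> (\<forall>g1 g2 g3 g. g1 \<in> B \<and> g2 \<in> B \<and> g3 \<in> B \<and> g1 \<noteq> g2 \<and> g1 \<noteq> g3 \<and> g2 \<noteq> g3
          \<and> g \<in> PhiE \<and> ipE g g1 \<in> {1, -1} \<and> ipE g g2 \<in> {1, -1} \<and> ipE g g3 \<in> {1, -1}
          \<longrightarrow> (let v = vsub (vsc 2 g)
                       (vadd (vsc (ipE g g1) g1) (vadd (vsc (ipE g g2) g2) (vsc (ipE g g3) g3)))
               in (if v \<in> PhiPlus then v else vneg v) \<in> B))"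

definition sperm :: "nat \<Rightarrow> nat" where
  "sperm k = (if k = 1 then 6 else if k = 6 then 1 else if k = 3 then 5
              else if k = 5 then 3 else k)"

text \<open>sigma in coordinates: sigma(alpha_i) = alpha_(sperm i).\<close>
definition sigmaE :: "vec \<Rightarrow> vec" where
  "sigmaE v = (\<lambda>k. v (sperm k))"

definition pE :: "vec \<Rightarrow> vec" where
  "pE v = vadd (vsc (v 1 + v 6) beta1)
           (vadd (vsc (v 3 + v 5) beta2) (vadd (vsc (v 4) beta3) (vsc (v 2) beta4)))"

definition preimE :: "vec set \<Rightarrow> vec set" where
  "preimE X = {v \<in> PhiPlus. pE v \<in> X}"

definition admF :: "vec set \<Rightarrow> bool" where
  "admF X \<longleftrightarrow> X \<subseteq> PsiPlus \<and> (\<forall>x\<in>X. \<forall>y\<in>X. x \<noteq> y \<longrightarrow> ip4 x y = 0)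
              \<and> admE (preimE X)"

definition reprI :: "vec set" where "reprI = {}"
definition reprII :: "vec set" where "reprII = {posF (vsub (eps 4) (eps 3))}"
definition reprIII :: "vec set" where
  "reprIII = {posF (vsc (1/2) (vsub (vsub (vsub (eps 1) (eps 2)) (eps 3)) (eps 4)))}"
definition reprIV :: "vec set" where
  "reprIV = {posF (vsub (eps 3) (eps 2)), posF (vadd (eps 3) (eps 2))}"
definition reprV :: "vec set" where
  "reprV = {posF (vsc (1/2) (vsub (vsub (vsub (eps 1) (eps 2)) (eps 3)) (eps 4))),
            posF (vsub (eps 3) (eps 2)), posF (vadd (eps 4) (eps 1))}"
definition reprVI :: "vec set" where
  "reprVI = {posF (vsub (eps 3) (eps 2)), posF (vadd (eps 3) (eps 2)),
             posF (vadd (eps 4) (eps 1)), posF (vsub (eps 4) (eps 1))}"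

end

theory Submission
  imports Defs
begin

text \<open>
  Proof strategy.  Everything in the statement is finite, so the proof reduces the
  statement to finitely many integer computations and transfers them back.

  Roots are encoded by integer tuples: vectors of R^4 in doubled coordinates (so that all
  roots of F4 become integral) and vectors of V by their coefficients with respect to
  the simple roots alpha_i.

  The bijection is then a structural fact about folding: the fibres of p on Phi+ are
  the sigma-orbits, and (p x, p y) is the average of (x, y) and (x, sigma y); hence a
  sigma-invariant orthogonal set is the full preimage of an orthogonal set.

  For the classification, the Weyl group acts on subsets of Psi+ preserving
  orthogonality and the numbers of long and short roots (the shape).  Enumerating all
  orthogonal subsets of Psi+, a certificate shows that an admissible set has the shape of
  one of the six representatives, and that all orthogonal sets of that shape form a list
  which a chain of reflections shows to lie in one orbit.  Hence each such list is
  exactly an orbit, and the cardinalities are read off from the lists.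
\<close>

type_synonym v4 = "int \<times> int \<times> int \<times> int"
type_synonym v6 = "int \<times> int \<times> int \<times> int \<times> int \<times> int"

fun ip4i :: "v4 \<Rightarrow> v4 \<Rightarrow> int" where
  "ip4i (a,b,c,d) (a',b',c',d') = a*a' + b*b' + c*c' + d*d'"
fun add4 :: "v4 \<Rightarrow> v4 \<Rightarrow> v4" where
  "add4 (a,b,c,d) (a',b',c',d') = (a+a', b+b', c+c', d+d')"
fun sub4 :: "v4 \<Rightarrow> v4 \<Rightarrow> v4" where
  "sub4 (a,b,c,d) (a',b',c',d') = (a-a', b-b', c-c', d-d')"
fun smul4 :: "int \<Rightarrow> v4 \<Rightarrow> v4" where
  "smul4 k (a,b,c,d) = (k*a, k*b, k*c, k*d)"

text \<open>In doubled coordinates the Cartan integer 2(v,r)/(r,r) is an integer division.\<close>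
definition refl4i :: "v4 \<Rightarrow> v4 \<Rightarrow> v4" where
  "refl4i r v = sub4 v (smul4 (2 * ip4i v r div ip4i r r) r)"

text \<open>Membership in the cone spanned by beta1..beta4: in doubled coordinates (p,q,r,s) the
  coefficients of beta1..beta4 are p, (3p+q+r+s)/2, (2p+r+s)/2 and (p+s)/2.\<close>
fun in_cone4 :: "v4 \<Rightarrow> bool" where
  "in_cone4 (a,b,c,d) \<longleftrightarrow> 0 \<le> a \<and> 0 \<le> a + d \<and> 0 \<le> 2*a + c + d \<and> 0 \<le> 3*a + b + c + d"

text \<open>The vector k eps_i in doubled coordinates is unit4 (2 k) i.\<close>
fun unit4 :: "int \<Rightarrow> nat \<Rightarrow> v4" where
  "unit4 k i = (if i = 1 then (k,0,0,0) else if i = 2 then (0,k,0,0)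
     else if i = 3 then (0,0,k,0) else (0,0,0,k))"

fun ip6i :: "v6 \<Rightarrow> v6 \<Rightarrow> int" where
  "ip6i (a1,a2,a3,a4,a5,a6) (b1,b2,b3,b4,b5,b6) =
     2*(a1*b1 + a2*b2 + a3*b3 + a4*b4 + a5*b5 + a6*b6)
     - (a1*b3 + a3*b1) - (a3*b4 + a4*b3) - (a4*b5 + a5*b4) - (a5*b6 + a6*b5) - (a2*b4 + a4*b2)"
fun sub6 :: "v6 \<Rightarrow> v6 \<Rightarrow> v6" where
  "sub6 (a1,a2,a3,a4,a5,a6) (b1,b2,b3,b4,b5,b6) = (a1-b1, a2-b2, a3-b3, a4-b4, a5-b5, a6-b6)"
fun smul6 :: "int \<Rightarrow> v6 \<Rightarrow> v6" where
  "smul6 k (a1,a2,a3,a4,a5,a6) = (k*a1, k*a2, k*a3, k*a4, k*a5, k*a6)"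

fun unit6 :: "nat \<Rightarrow> v6" where
  "unit6 i = (if i = 1 then (1,0,0,0,0,0) else if i = 2 then (0,1,0,0,0,0)
    else if i = 3 then (0,0,1,0,0,0) else if i = 4 then (0,0,0,1,0,0)
    else if i = 5 then (0,0,0,0,1,0) else (0,0,0,0,0,1))"

text \<open>Simple reflections of E6 (all roots have squared length 2).\<close>
definition refl6i :: "nat \<Rightarrow> v6 \<Rightarrow> v6" where
  "refl6i i v = sub6 v (smul6 (ip6i v (unit6 i)) (unit6 i))"

fun sigma6 :: "v6 \<Rightarrow> v6" where
  "sigma6 (a1,a2,a3,a4,a5,a6) = (a6,a2,a5,a4,a3,a1)"

text \<open>The folding map p, with values in doubled coordinates.\<close>
fun proj6 :: "v6 \<Rightarrow> v4" where
  "proj6 (a1,a2,a3,a4,a5,a6) =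
     (a1+a6, -(a1+a6) + 2*(a3+a5) - 2*a4, -(a1+a6) + 2*a4 - 2*a2, -(a1+a6) + 2*a2)"

fun nonneg6 :: "v6 \<Rightarrow> bool" where
  "nonneg6 (a1,a2,a3,a4,a5,a6) \<longleftrightarrow> 0\<le>a1 \<and> 0\<le>a2 \<and> 0\<le>a3 \<and> 0\<le>a4 \<and> 0\<le>a5 \<and> 0\<le>a6"

definition psi_pos :: "v4 list" where
  "psi_pos = [(0,-2,0,2), (0,-2,2,0), (0,0,-2,2), (0,0,0,2), (0,0,2,0), (0,0,2,2), (0,2,0,0), (0,2,0,2), (0,2,2,0), (1,-1,-1,-1), (1,-1,-1,1), (1,-1,1,-1), (1,-1,1,1), (1,1,-1,-1), (1,1,-1,1), (1,1,1,-1), (1,1,1,1), (2,-2,0,0), (2,0,-2,0), (2,0,0,-2), (2,0,0,0), (2,0,0,2), (2,0,2,0), (2,2,0,0)]"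

definition phi_pos :: "v6 list" where
  "phi_pos = [(0,0,0,0,0,1), (0,0,0,0,1,0), (0,0,0,0,1,1), (0,0,0,1,0,0), (0,0,0,1,1,0), (0,0,0,1,1,1), (0,0,1,0,0,0), (0,0,1,1,0,0), (0,0,1,1,1,0), (0,0,1,1,1,1), (0,1,0,0,0,0), (0,1,0,1,0,0), (0,1,0,1,1,0), (0,1,0,1,1,1), (0,1,1,1,0,0), (0,1,1,1,1,0), (0,1,1,1,1,1), (0,1,1,2,1,0), (0,1,1,2,1,1), (0,1,1,2,2,1), (1,0,0,0,0,0), (1,0,1,0,0,0), (1,0,1,1,0,0), (1,0,1,1,1,0), (1,0,1,1,1,1), (1,1,1,1,0,0), (1,1,1,1,1,0), (1,1,1,1,1,1), (1,1,1,2,1,0), (1,1,1,2,1,1), (1,1,1,2,2,1), (1,1,2,2,1,0), (1,1,2,2,1,1), (1,1,2,2,2,1), (1,1,2,3,2,1), (1,2,2,3,2,1)]"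

definition psi_all :: "v4 list" where "psi_all = psi_pos @ map (smul4 (-1)) psi_pos"
definition phi_all :: "v6 list" where "phi_all = phi_pos @ map (smul6 (-1)) phi_pos"

definition pos4 :: "v4 \<Rightarrow> v4" where
  "pos4 v = (if v \<in> set psi_pos then v else smul4 (-1) v)"
definition pos6 :: "v6 \<Rightarrow> v6" where
  "pos6 v = (if v \<in> set phi_pos then v else smul6 (-1) v)"

text \<open>Each entry (c, i, p) records that c = refl6i i p for an earlier root p;
  starting from the simple roots this reaches every root of phi_all.\<close>
definition phi_chain :: "(v6 \<times> nat \<times> v6) list" where
  "phi_chain = [((-1,0,0,0,0,0),1,(1,0,0,0,0,0)), ((1,0,1,0,0,0),3,(1,0,0,0,0,0)), ((0,-1,0,0,0,0),2,(0,1,0,0,0,0)), ((0,1,0,1,0,0),4,(0,1,0,0,0,0)), ((0,0,-1,0,0,0),3,(0,0,1,0,0,0)), ((0,0,1,1,0,0),4,(0,0,1,0,0,0)), ((0,0,0,-1,0,0),4,(0,0,0,1,0,0)), ((0,0,0,1,1,0),5,(0,0,0,1,0,0)), ((0,0,0,0,-1,0),5,(0,0,0,0,1,0)), ((0,0,0,0,1,1),6,(0,0,0,0,1,0)), ((0,0,0,0,0,-1),6,(0,0,0,0,0,1)), ((-1,0,-1,0,0,0),3,(-1,0,0,0,0,0)), ((1,0,1,1,0,0),4,(1,0,1,0,0,0)), ((0,-1,0,-1,0,0),4,(0,-1,0,0,0,0)), ((0,1,1,1,0,0),3,(0,1,0,1,0,0)), ((0,1,0,1,1,0),5,(0,1,0,1,0,0)),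 ((0,0,-1,-1,0,0),4,(0,0,-1,0,0,0)), ((0,0,1,1,1,0),5,(0,0,1,1,0,0)), ((0,0,0,-1,-1,0),5,(0,0,0,-1,0,0)), ((0,0,0,1,1,1),6,(0,0,0,1,1,0)), ((0,0,0,0,-1,-1),6,(0,0,0,0,-1,0)), ((-1,0,-1,-1,0,0),4,(-1,0,-1,0,0,0)), ((1,1,1,1,0,0),2,(1,0,1,1,0,0)), ((1,0,1,1,1,0),5,(1,0,1,1,0,0)), ((0,-1,-1,-1,0,0),3,(0,-1,0,-1,0,0)), ((0,-1,0,-1,-1,0),5,(0,-1,0,-1,0,0)), ((0,1,1,1,1,0),5,(0,1,1,1,0,0)), ((0,1,0,1,1,1),6,(0,1,0,1,1,0)), ((0,0,-1,-1,-1,0),5,(0,0,-1,-1,0,0)), ((0,0,1,1,1,1),6,(0,0,1,1,1,0)), ((0,0,0,-1,-1,-1),6,(0,0,0,-1,-1,0)), ((-1,-1,-1,-1,0,0),2,(-1,0,-1,-1,0,0)), ((-1,0,-1,-1,-1,0),5,(-1,0,-1,-1,0,0)), ((1,1,1,1,1,0),5,(1,1,1,1,0,0)), ((1,0,1,1,1,1),6,(1,0,1,1,1,0)), ((0,-1,-1,-1,-1,0),5,(0,-1,-1,-1,0,0)), ((0,-1,0,-1,-1,-1),6,(0,-1,0,-1,-1,0)), ((0,1,1,2,1,0),4,(0,1,1,1,1,0)), ((0,1,1,1,1,1),6,(0,1,1,1,1,0)), ((0,0,-1,-1,-1,-1),6,(0,0,-1,-1,-1,0)), ((-1,-1,-1,-1,-1,0),5,(-1,-1,-1,-1,0,0)),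 ((-1,0,-1,-1,-1,-1),6,(-1,0,-1,-1,-1,0)), ((1,1,1,2,1,0),4,(1,1,1,1,1,0)), ((1,1,1,1,1,1),6,(1,1,1,1,1,0)), ((0,-1,-1,-2,-1,0),4,(0,-1,-1,-1,-1,0)), ((0,-1,-1,-1,-1,-1),6,(0,-1,-1,-1,-1,0)), ((0,1,1,2,1,1),6,(0,1,1,2,1,0)), ((-1,-1,-1,-2,-1,0),4,(-1,-1,-1,-1,-1,0)), ((-1,-1,-1,-1,-1,-1),6,(-1,-1,-1,-1,-1,0)), ((1,1,2,2,1,0),3,(1,1,1,2,1,0)), ((1,1,1,2,1,1),6,(1,1,1,2,1,0)), ((0,-1,-1,-2,-1,-1),6,(0,-1,-1,-2,-1,0)), ((0,1,1,2,2,1),5,(0,1,1,2,1,1)), ((-1,-1,-2,-2,-1,0),3,(-1,-1,-1,-2,-1,0)), ((-1,-1,-1,-2,-1,-1),6,(-1,-1,-1,-2,-1,0)), ((1,1,2,2,1,1),6,(1,1,2,2,1,0)), ((1,1,1,2,2,1),5,(1,1,1,2,1,1)), ((0,-1,-1,-2,-2,-1),5,(0,-1,-1,-2,-1,-1)), ((-1,-1,-2,-2,-1,-1),6,(-1,-1,-2,-2,-1,0)), ((-1,-1,-1,-2,-2,-1),5,(-1,-1,-1,-2,-1,-1)), ((1,1,2,2,2,1),5,(1,1,2,2,1,1)), ((-1,-1,-2,-2,-2,-1),5,(-1,-1,-2,-2,-1,-1)), ((1,1,2,3,2,1),4,(1,1,2,2,2,1)), ((-1,-1,-2,-3,-2,-1),4,(-1,-1,-2,-2,-2,-1)),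 ((1,2,2,3,2,1),2,(1,1,2,3,2,1)), ((-1,-2,-2,-3,-2,-1),2,(-1,-1,-2,-3,-2,-1))]"

text \<open>Representatives of the six orbits, in the order I-VI of the statement.\<close>
definition orbit_reps :: "v4 list list" where
  "orbit_reps = [[], [(0,0,-2,2)], [(1,-1,-1,-1)], [(0,-2,2,0), (0,2,2,0)], [(1,-1,-1,-1), (0,-2,2,0), (2,0,0,2)], [(0,-2,2,0), (0,2,2,0), (2,0,0,2), (2,0,0,-2)]]"

text \<open>For each representative a chain of reflections: an entry (C, r, U) records that
  C is the image of an earlier member U under the reflection in r.\<close>
definition orbit_chains :: "(v4 list \<times> v4 \<times> v4 list) list list" where
  "orbit_chains = [[],
    [([(0,-2,2,0)],(0,-2,0,2),[(0,0,-2,2)]), ([(0,-2,0,2)],(0,-2,2,0),[(0,0,-2,2)]), ([(0,0,2,2)],(0,0,0,2),[(0,0,-2,2)]), ([(0,2,2,0)],(0,2,0,2),[(0,0,-2,2)]), ([(0,2,0,2)],(0,2,2,0),[(0,0,-2,2)]), ([(2,-2,0,0)],(1,-1,-1,1),[(0,0,-2,2)]), ([(2,2,0,0)],(1,1,-1,1),[(0,0,-2,2)]), ([(2,0,0,-2)],(2,0,-2,0),[(0,0,-2,2)]), ([(2,0,-2,0)],(2,0,0,-2),[(0,0,-2,2)]), ([(2,0,2,0)],(2,0,0,2),[(0,0,-2,2)]), ([(2,0,0,2)],(2,0,2,0),[(0,0,-2,2)])],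
    [([(1,-1,-1,1)],(0,0,0,2),[(1,-1,-1,-1)]), ([(1,-1,1,-1)],(0,0,2,0),[(1,-1,-1,-1)]), ([(1,-1,1,1)],(0,0,2,2),[(1,-1,-1,-1)]), ([(1,1,-1,-1)],(0,2,0,0),[(1,-1,-1,-1)]), ([(1,1,-1,1)],(0,2,0,2),[(1,-1,-1,-1)]), ([(1,1,1,-1)],(0,2,2,0),[(1,-1,-1,-1)]), ([(0,0,0,2)],(1,-1,-1,1),[(1,-1,-1,-1)]), ([(0,0,2,0)],(1,-1,1,-1),[(1,-1,-1,-1)]), ([(0,2,0,0)],(1,1,-1,-1),[(1,-1,-1,-1)]), ([(2,0,0,0)],(1,1,1,1),[(1,-1,-1,-1)]), ([(1,1,1,1)],(2,0,0,0),[(1,-1,-1,-1)])],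
    [([(0,0,-2,2), (0,0,2,2)],(0,-2,0,2),[(0,-2,2,0), (0,2,2,0)]), ([(0,-2,0,2), (0,2,0,2)],(0,0,-2,2),[(0,-2,2,0), (0,2,2,0)]), ([(0,-2,2,0), (2,0,0,-2)],(1,-1,-1,-1),[(0,-2,2,0), (0,2,2,0)]), ([(0,-2,2,0), (2,0,0,2)],(1,-1,-1,1),[(0,-2,2,0), (0,2,2,0)]), ([(2,0,0,-2), (0,2,2,0)],(1,-1,1,-1),[(0,-2,2,0), (0,2,2,0)]), ([(2,0,0,2), (0,2,2,0)],(1,-1,1,1),[(0,-2,2,0), (0,2,2,0)]), ([(2,0,-2,0), (2,0,2,0)],(2,-2,0,0),[(0,-2,2,0), (0,2,2,0)]), ([(2,-2,0,0), (2,2,0,0)],(2,0,-2,0),[(0,-2,2,0), (0,2,2,0)]), ([(0,0,-2,2), (2,-2,0,0)],(1,-1,-1,-1),[(0,0,-2,2), (0,0,2,2)]), ([(2,-2,0,0), (0,0,2,2)],(1,-1,-1,1),[(0,0,-2,2), (0,0,2,2)]), ([(0,0,-2,2), (2,2,0,0)],(1,1,-1,-1),[(0,0,-2,2), (0,0,2,2)]), ([(2,2,0,0), (0,0,2,2)],(1,1,-1,1),[(0,0,-2,2), (0,0,2,2)]), ([(2,0,0,-2), (2,0,0,2)],(2,0,-2,0),[(0,0,-2,2), (0,0,2,2)]), ([(0,-2,0,2), (2,0,-2,0)],(1,-1,-1,-1),[(0,-2,0,2), (0,2,0,2)]), ([(2,0,-2,0), (0,2,0,2)],(1,-1,-1,1),[(0,-2,0,2),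 (0,2,0,2)]), ([(0,-2,0,2), (2,0,2,0)],(1,-1,1,-1),[(0,-2,0,2), (0,2,0,2)]), ([(2,0,2,0), (0,2,0,2)],(1,-1,1,1),[(0,-2,0,2), (0,2,0,2)])],
    [([(1,-1,-1,-1), (0,0,-2,2), (2,2,0,0)],(0,-2,0,2),[(1,-1,-1,-1), (0,-2,2,0), (2,0,0,2)]), ([(1,-1,-1,-1), (0,-2,0,2), (2,0,2,0)],(0,0,-2,2),[(1,-1,-1,-1), (0,-2,2,0), (2,0,0,2)]), ([(1,-1,-1,1), (0,-2,2,0), (2,0,0,-2)],(0,0,0,2),[(1,-1,-1,-1), (0,-2,2,0), (2,0,0,2)]), ([(1,-1,1,-1), (0,2,2,0), (2,0,0,2)],(0,0,2,0),[(1,-1,-1,-1), (0,-2,2,0), (2,0,0,2)]), ([(1,-1,1,1), (0,2,0,2), (2,0,-2,0)],(0,0,2,2),[(1,-1,-1,-1), (0,-2,2,0), (2,0,0,2)]), ([(1,1,-1,-1), (0,2,2,0), (2,0,0,2)],(0,2,0,0),[(1,-1,-1,-1), (0,-2,2,0), (2,0,0,2)]), ([(1,1,-1,1), (0,0,2,2), (2,-2,0,0)],(0,2,0,2),[(1,-1,-1,-1), (0,-2,2,0), (2,0,0,2)]), ([(1,1,1,-1), (0,-2,2,0), (2,0,0,2)],(0,2,2,0),[(1,-1,-1,-1), (0,-2,2,0), (2,0,0,2)]), ([(0,0,0,2), (0,-2,2,0), (0,2,2,0)],(1,-1,-1,1),[(1,-1,-1,-1), (0,-2,2,0), (2,0,0,2)]),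 ([(0,0,2,0), (2,0,0,-2), (2,0,0,2)],(1,-1,1,-1),[(1,-1,-1,-1), (0,-2,2,0), (2,0,0,2)]), ([(0,2,0,0), (2,0,0,-2), (2,0,0,2)],(1,1,-1,-1),[(1,-1,-1,-1), (0,-2,2,0), (2,0,0,2)]), ([(2,0,0,0), (0,-2,2,0), (0,2,2,0)],(1,1,1,1),[(1,-1,-1,-1), (0,-2,2,0), (2,0,0,2)]), ([(1,1,1,1), (0,-2,2,0), (2,0,0,-2)],(2,0,0,0),[(1,-1,-1,-1), (0,-2,2,0), (2,0,0,2)]), ([(1,-1,-1,1), (0,0,2,2), (2,2,0,0)],(0,0,0,2),[(1,-1,-1,-1), (0,0,-2,2), (2,2,0,0)]), ([(1,-1,1,-1), (0,0,2,2), (2,2,0,0)],(0,0,2,0),[(1,-1,-1,-1), (0,0,-2,2), (2,2,0,0)]), ([(1,-1,1,1), (0,0,-2,2), (2,2,0,0)],(0,0,2,2),[(1,-1,-1,-1), (0,0,-2,2), (2,2,0,0)]), ([(1,1,-1,-1), (0,0,-2,2), (2,-2,0,0)],(0,2,0,0),[(1,-1,-1,-1), (0,0,-2,2), (2,2,0,0)]), ([(1,1,-1,1), (0,2,2,0), (2,0,0,-2)],(0,2,0,2),[(1,-1,-1,-1), (0,0,-2,2), (2,2,0,0)]), ([(1,1,1,-1), (0,2,0,2), (2,0,-2,0)],(0,2,2,0),[(1,-1,-1,-1), (0,0,-2,2), (2,2,0,0)]), ([(0,0,0,2), (2,-2,0,0), (2,2,0,0)],(1,-1,-1,1),[(1,-1,-1,-1),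 (0,0,-2,2), (2,2,0,0)]), ([(0,0,2,0), (2,-2,0,0), (2,2,0,0)],(1,-1,1,-1),[(1,-1,-1,-1), (0,0,-2,2), (2,2,0,0)]), ([(0,2,0,0), (0,0,-2,2), (0,0,2,2)],(1,1,-1,-1),[(1,-1,-1,-1), (0,0,-2,2), (2,2,0,0)]), ([(2,0,0,0), (0,0,-2,2), (0,0,2,2)],(1,1,1,1),[(1,-1,-1,-1), (0,0,-2,2), (2,2,0,0)]), ([(1,1,1,1), (0,0,-2,2), (2,-2,0,0)],(2,0,0,0),[(1,-1,-1,-1), (0,0,-2,2), (2,2,0,0)]), ([(1,-1,-1,1), (0,2,0,2), (2,0,2,0)],(0,0,0,2),[(1,-1,-1,-1), (0,-2,0,2), (2,0,2,0)]), ([(1,-1,1,-1), (0,-2,0,2), (2,0,-2,0)],(0,0,2,0),[(1,-1,-1,-1), (0,-2,0,2), (2,0,2,0)]), ([(1,-1,1,1), (0,2,2,0), (2,0,0,-2)],(0,0,2,2),[(1,-1,-1,-1), (0,-2,0,2), (2,0,2,0)]), ([(1,1,-1,-1), (0,2,0,2), (2,0,2,0)],(0,2,0,0),[(1,-1,-1,-1), (0,-2,0,2), (2,0,2,0)]), ([(1,1,-1,1), (0,-2,0,2), (2,0,2,0)],(0,2,0,2),[(1,-1,-1,-1), (0,-2,0,2), (2,0,2,0)]), ([(1,1,1,-1), (0,0,2,2), (2,-2,0,0)],(0,2,2,0),[(1,-1,-1,-1), (0,-2,0,2), (2,0,2,0)]), ([(0,0,0,2), (2,0,-2,0), (2,0,2,0)],(1,-1,-1,1),[(1,-1,-1,-1),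 (0,-2,0,2), (2,0,2,0)]), ([(0,0,2,0), (0,-2,0,2), (0,2,0,2)],(1,-1,1,-1),[(1,-1,-1,-1), (0,-2,0,2), (2,0,2,0)]), ([(0,2,0,0), (2,0,-2,0), (2,0,2,0)],(1,1,-1,-1),[(1,-1,-1,-1), (0,-2,0,2), (2,0,2,0)]), ([(2,0,0,0), (0,-2,0,2), (0,2,0,2)],(1,1,1,1),[(1,-1,-1,-1), (0,-2,0,2), (2,0,2,0)]), ([(1,1,1,1), (0,-2,0,2), (2,0,-2,0)],(2,0,0,0),[(1,-1,-1,-1), (0,-2,0,2), (2,0,2,0)])],
    [([(0,0,-2,2), (0,0,2,2), (2,2,0,0), (2,-2,0,0)],(0,-2,0,2),[(0,-2,2,0), (0,2,2,0), (2,0,0,2), (2,0,0,-2)]), ([(0,-2,0,2), (0,2,0,2), (2,0,2,0), (2,0,-2,0)],(0,0,-2,2),[(0,-2,2,0), (0,2,2,0), (2,0,0,2), (2,0,0,-2)])]]"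

definition orbit_classes :: "(v4 list \<times> (v4 list \<times> v4 \<times> v4 list) list) list" where
  "orbit_classes = zip orbit_reps orbit_chains"

text \<open>Aligned with orth_lists psi_pos: a violation of admissibility for every
  enumerated orthogonal set that is not admissible, None otherwise.\<close>
definition witnesses :: "(v6 \<times> v6 \<times> v6 \<times> v6) option list" where
  "witnesses = [None, None, None, None, None, None, None, None, None, None, None, None, Some ((0,1,1,2,2,1),(1,0,1,1,1,1),(1,1,2,2,1,0),(-1,-1,-2,-3,-2,-1)), Some ((1,1,1,1,1,1),(0,1,1,2,2,1),(1,1,2,2,1,0),(-1,-2,-2,-3,-2,-1)), Some ((0,1,1,2,2,1),(1,1,1,2,1,1),(1,1,2,2,1,0),(-1,-2,-2,-3,-2,-1)), None, Some ((0,0,1,1,1,1),(1,2,2,3,2,1),(1,0,1,1,1,0),(-1,-1,-2,-3,-2,-1)), Some ((1,1,1,1,1,1),(0,0,1,1,1,1),(1,0,1,1,1,0),(-1,-1,-2,-2,-2,-1)), Some ((1,1,1,2,1,1),(0,0,1,1,1,1),(1,0,1,1,1,0),(-1,-1,-2,-3,-2,-1)), None, Some ((0,1,1,1,1,1),(1,1,1,1,1,0),(1,1,2,3,2,1),(-1,-2,-2,-3,-2,-1)), Some ((1,0,1,1,1,1),(0,1,1,1,1,1),(1,1,1,1,1,0),(-1,-1,-2,-2,-2,-1)), Some ((1,1,1,2,1,1),(0,1,1,1,1,1),(1,1,1,1,1,0),(-1,-2,-2,-3,-2,-1)), Some ((0,0,1,1,1,1),(0,1,1,1,1,1),(1,0,1,1,1,0),(-1,-1,-1,-2,-1,0)),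 Some ((0,0,1,1,1,1),(1,1,1,1,1,0),(1,1,1,2,1,1),(-1,-1,-1,-2,-1,0)), None, Some ((1,0,1,0,0,0),(0,0,0,0,1,1),(1,1,2,3,2,1),(-1,-1,-2,-2,-2,-1)), Some ((1,0,1,0,0,0),(1,2,2,3,2,1),(0,0,0,0,1,1),(-1,-1,-2,-2,-2,-1)), Some ((1,0,1,0,0,0),(1,1,1,2,1,1),(0,0,0,0,1,1),(-1,-1,-1,-1,-1,-1)), Some ((1,0,1,0,0,0),(0,1,1,2,2,1),(0,0,0,0,1,1),(-1,-1,-1,-1,0,0)), Some ((0,0,0,0,1,1),(1,1,1,2,1,1),(1,1,2,2,1,0),(-1,-1,-1,-2,-1,0)), None, Some ((1,1,1,2,1,0),(1,1,2,2,2,1),(0,1,1,2,1,1),(-1,-2,-2,-3,-2,-1)), Some ((1,1,1,2,1,0),(1,0,1,1,1,1),(0,1,1,2,1,1),(-1,-1,-2,-3,-2,-1)), Some ((1,1,1,2,1,0),(1,1,1,1,1,1),(0,1,1,2,1,1),(-1,-2,-2,-3,-2,-1)), Some ((1,1,1,2,1,0),(0,0,1,1,1,1),(1,0,1,1,1,0),(-1,-1,-1,-1,-1,0)), Some ((0,0,1,1,1,1),(0,1,1,2,1,1),(1,1,1,2,1,0),(-1,-1,-1,-1,-1,0)), Some ((1,1,1,2,1,0),(0,1,1,1,1,1),(0,1,1,2,1,1),(-1,0,-1,-1,-1,0)), Some ((0,1,1,2,1,1),(1,1,1,1,1,0),(1,1,1,2,1,0),(-1,0,-1,-1,-1,0)),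 Some ((0,0,1,1,1,1),(0,1,1,2,1,1),(1,1,1,1,1,0),(-1,0,0,0,0,0)), None, Some ((0,0,0,1,1,1),(1,1,2,2,2,1),(1,0,1,1,0,0),(-1,-1,-2,-3,-2,-1)), Some ((0,0,0,1,1,1),(1,2,2,3,2,1),(1,0,1,1,0,0),(-1,-1,-2,-3,-2,-1)), Some ((1,1,1,1,1,1),(0,0,0,1,1,1),(1,0,1,1,0,0),(-1,-1,-1,-2,-1,-1)), Some ((0,0,0,1,1,1),(0,1,1,2,2,1),(1,0,1,1,0,0),(-1,-1,-1,-1,0,0)), Some ((1,0,1,1,0,0),(1,1,2,2,1,0),(0,0,0,1,1,1),(-1,-1,-1,-1,0,0)), Some ((1,0,1,0,0,0),(0,0,0,1,1,1),(1,0,1,1,0,0),(-1,-1,-2,-2,-1,0)), Some ((0,0,0,0,1,1),(1,2,2,3,2,1),(1,0,1,1,0,0),(-1,-1,-2,-2,-1,0)), Some ((0,0,0,0,1,1),(1,0,1,1,0,0),(1,1,2,2,1,0),(-1,-1,-1,-2,-1,0)), None, Some ((1,1,1,1,0,0),(1,1,2,2,2,1),(0,1,0,1,1,1),(-1,-2,-2,-3,-2,-1)), Some ((1,1,1,1,0,0),(0,1,0,1,1,1),(1,1,2,3,2,1),(-1,-2,-2,-3,-2,-1)), Some ((1,1,1,1,0,0),(1,0,1,1,1,1),(0,1,0,1,1,1),(-1,-1,-1,-2,-1,-1)), Some ((0,1,1,2,2,1),(1,1,1,1,0,0),(0,1,0,1,1,1),(-1,0,-1,-1,0,0)), Some ((1,1,2,2,1,0),(1,1,1,1,0,0),(1,0,1,1,1,1),(-1,-1,-2,-2,-1,-1)),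 Some ((1,0,1,0,0,0),(1,1,1,1,0,0),(0,1,0,1,1,1),(-1,-1,-2,-2,-1,0)), Some ((0,0,0,0,1,1),(1,1,1,1,0,0),(1,0,1,0,0,0),(-1,-1,-2,-2,-1,0)), Some ((0,0,0,0,1,1),(1,1,2,2,1,0),(1,1,1,1,0,0),(-1,-1,-1,-2,-1,0)), Some ((0,0,0,1,1,1),(1,1,1,1,0,0),(0,1,0,1,1,1),(-1,-1,-2,-2,-1,0)), Some ((1,0,1,1,0,0),(0,0,0,1,1,1),(1,1,1,1,0,0),(-1,-1,-2,-2,-1,0)), Some ((1,0,1,1,0,0),(1,1,2,2,1,0),(0,0,0,1,1,1),(-1,-1,-1,-1,0,0)), Some ((0,0,0,0,1,1),(1,0,1,1,0,0),(0,0,0,1,1,1),(-1,-1,-2,-2,-1,0)), Some ((0,0,0,0,1,1),(1,0,1,1,0,0),(1,1,2,2,1,0),(-1,-1,-1,-2,-1,0)), None, Some ((1,0,0,0,0,0),(1,1,2,2,2,1),(0,0,0,0,0,1),(-1,-1,-1,-1,-1,-1)), Some ((1,0,0,0,0,0),(0,0,0,0,0,1),(1,1,2,3,2,1),(-1,-1,-1,-2,-1,-1)), Some ((1,0,0,0,0,0),(1,2,2,3,2,1),(0,0,0,0,0,1),(-1,-1,-1,-2,-1,-1)), Some ((0,0,1,1,1,1),(1,0,0,0,0,0),(1,0,1,1,1,0),(-1,-1,-1,-2,-1,0)), Some ((0,0,1,1,1,1),(1,2,2,3,2,1),(1,0,0,0,0,0),(-1,-1,-1,-2,-1,0)), Some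 ((1,0,0,0,0,0),(0,1,1,1,1,1),(0,0,0,0,0,1),(-1,-1,-1,-2,-1,0)), Some ((1,1,1,1,1,0),(1,0,0,0,0,0),(0,1,1,1,1,1),(-1,-1,-1,-2,-1,0)), Some ((0,0,1,1,1,1),(1,1,1,1,1,0),(1,0,0,0,0,0),(-1,-1,-1,-2,-1,0)), Some ((1,1,1,2,1,0),(1,0,0,0,0,0),(0,1,1,2,1,1),(-1,-1,-1,-1,-1,0)), Some ((0,1,1,2,1,1),(1,0,0,0,0,0),(1,1,1,2,1,0),(-1,-1,-1,-1,-1,0)), Some ((0,0,1,1,1,1),(0,1,1,2,1,1),(1,0,0,0,0,0),(-1,-1,-1,-1,-1,0)), Some ((0,1,1,2,1,1),(1,1,1,1,1,0),(1,0,0,0,0,0),(-1,0,-1,-1,-1,0)), Some ((0,0,1,1,1,1),(0,1,1,2,1,1),(1,1,1,1,1,0),(-1,0,0,0,0,0)), None, None, Some ((0,0,1,1,1,0),(1,1,1,2,2,1),(1,1,2,2,1,1),(-1,-1,-2,-3,-2,-1)), None, Some ((0,0,1,1,1,0),(1,0,1,1,1,1),(1,2,2,3,2,1),(-1,-1,-2,-3,-2,-1)), Some ((0,0,1,1,1,0),(0,1,1,1,1,1),(1,1,1,1,1,0),(-1,-1,-2,-2,-2,-1)), None, Some ((0,0,1,1,1,0),(1,0,1,0,0,0),(0,0,0,0,1,1),(-1,-1,-2,-2,-2,-1)), None, Some ((1,1,1,2,1,0),(0,0,1,1,1,0),(0,1,1,2,1,1),(-1,-1,-2,-3,-2,-1)),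 None, Some ((0,1,1,2,1,1),(1,1,1,1,1,0),(0,0,1,1,1,0),(-1,0,-1,-1,-1,0)), Some ((0,1,1,2,1,1),(1,1,1,1,1,0),(0,0,1,1,1,0),(-1,0,-1,-1,-1,0)), Some ((0,0,1,1,1,0),(0,0,0,1,1,1),(1,0,1,1,0,0),(-1,-1,-2,-3,-2,-1)), None, Some ((0,0,0,0,1,1),(1,0,1,1,0,0),(0,0,1,1,1,0),(-1,-1,-2,-2,-1,0)), Some ((0,0,0,0,1,1),(1,2,2,3,2,1),(1,0,1,1,0,0),(-1,-1,-2,-2,-1,0)), None, None, Some ((1,1,2,2,1,1),(0,1,1,1,1,0),(1,1,1,2,2,1),(-1,-2,-2,-3,-2,-1)), None, Some ((1,1,1,1,1,1),(0,1,1,1,1,0),(1,1,2,3,2,1),(-1,-2,-2,-3,-2,-1)), Some ((0,0,1,1,1,1),(0,1,1,1,1,0),(1,0,1,1,1,0),(-1,-1,-2,-2,-2,-1)), None, Some ((1,0,1,0,0,0),(0,1,1,1,1,0),(0,0,0,0,1,1),(-1,-1,-2,-2,-2,-1)), None, Some ((1,1,1,2,1,0),(0,1,1,1,1,0),(0,1,1,2,1,1),(-1,-2,-2,-3,-2,-1)), None, Some ((0,0,1,1,1,1),(0,1,1,1,1,0),(0,1,1,2,1,1),(-1,-1,-1,-1,-1,0)), Some ((0,0,1,1,1,1),(0,1,1,1,1,0),(0,1,1,2,1,1),(-1,-1,-1,-1,-1,0)), Some ((1,1,1,1,0,0),(0,1,1,1,1,0),(0,1,0,1,1,1),(-1,-2,-2,-3,-2,-1)),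 None, Some ((0,0,0,0,1,1),(0,1,1,1,1,0),(1,1,1,1,0,0),(-1,-1,-2,-2,-1,0)), Some ((0,0,0,0,1,1),(0,1,1,1,1,0),(1,1,1,1,0,0),(-1,-1,-2,-2,-1,0)), None, Some ((0,0,1,0,0,0),(0,0,0,0,1,0),(1,1,2,3,2,1),(-1,-1,-2,-2,-2,-1)), Some ((0,0,1,0,0,0),(1,2,2,3,2,1),(0,0,0,0,1,0),(-1,-1,-2,-2,-2,-1)), Some ((1,1,2,2,1,1),(0,0,1,0,0,0),(1,1,1,2,2,1),(0,-1,-1,-1,0,0)), Some ((1,0,1,1,1,1),(0,0,1,0,0,0),(0,0,0,0,1,0),(-1,-1,-2,-2,-2,-1)), None, Some ((1,1,1,1,1,1),(0,0,1,0,0,0),(0,0,0,0,1,0),(-1,-1,-2,-2,-2,-1)), None, None, None, Some ((1,1,2,2,1,1),(0,1,1,2,1,0),(1,1,1,2,2,1),(-1,-2,-2,-3,-2,-1)), None, Some ((1,1,1,2,1,1),(0,1,1,2,1,0),(1,1,2,2,2,1),(-1,-2,-2,-3,-2,-1)), Some ((0,0,1,1,1,1),(0,1,1,2,1,0),(1,0,1,1,1,0),(-1,-1,-2,-3,-2,-1)), None, Some ((0,1,1,2,1,0),(0,1,1,1,1,1),(1,1,1,1,1,0),(-1,-2,-2,-3,-2,-1)), None, Some ((0,0,1,1,1,1),(1,1,1,1,1,0),(0,1,1,2,1,0),(-1,-1,-1,-2,-1,0)), Some ((0,0,1,1,1,1),(1,1,1,1,1,0),(1,1,1,2,1,1),(-1,-1,-1,-2,-1,0)),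 Some ((0,0,0,1,1,1),(0,1,1,2,1,0),(1,0,1,1,0,0),(-1,-1,-2,-3,-2,-1)), None, Some ((1,1,1,1,0,0),(0,1,1,2,1,0),(0,1,0,1,1,1),(-1,-2,-2,-3,-2,-1)), None, Some ((1,0,1,1,0,0),(0,0,0,1,1,1),(1,1,1,1,0,0),(-1,-1,-2,-2,-1,0)), Some ((1,0,1,1,0,0),(0,0,0,1,1,1),(1,1,1,1,0,0),(-1,-1,-2,-2,-1,0)), Some ((0,0,1,0,0,0),(0,1,1,2,1,0),(0,0,0,0,1,0),(0,-1,-1,-1,-1,0)), Some ((0,0,1,0,0,0),(1,1,2,2,1,1),(1,1,1,2,2,1),(0,-1,-1,-1,0,0)), None, Some ((1,1,2,2,2,1),(0,0,1,1,0,0),(0,0,0,1,1,0),(-1,-1,-2,-3,-2,-1)), Some ((1,2,2,3,2,1),(0,0,1,1,0,0),(0,0,0,1,1,0),(-1,-1,-2,-3,-2,-1)), Some ((1,1,2,2,1,1),(1,1,1,2,2,1),(0,0,1,1,0,0),(0,-1,-1,-1,0,0)), Some ((1,0,1,1,1,1),(0,0,1,1,0,0),(0,0,0,1,1,0),(-1,-1,-2,-3,-2,-1)), None, Some ((1,1,1,2,1,1),(0,0,1,1,0,0),(0,0,0,1,1,0),(-1,-1,-2,-3,-2,-1)), None, Some ((0,1,1,1,1,0),(0,0,1,1,0,0),(0,0,0,1,1,0),(0,-1,-1,-2,-1,0)), Some ((0,1,1,1,1,0),(0,0,1,1,0,0),(1,1,2,2,1,1),(-1,-1,-2,-2,-1,0)),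 Some ((0,0,1,0,0,0),(0,0,1,1,0,0),(0,0,0,0,1,0),(-1,-1,-2,-2,-1,-1)), Some ((0,0,1,0,0,0),(1,2,2,3,2,1),(0,0,1,1,0,0),(-1,-1,-2,-2,-1,-1)), Some ((0,0,1,0,0,0),(0,0,1,1,0,0),(1,1,2,2,1,1),(-1,-1,-2,-2,-1,0)), Some ((0,0,1,0,0,0),(0,0,1,1,0,0),(0,0,0,0,1,0),(-1,-1,-2,-2,-1,-1)), Some ((0,0,1,0,0,0),(1,2,2,3,2,1),(0,0,1,1,0,0),(-1,-1,-2,-2,-1,-1)), None, Some ((0,1,0,1,1,0),(1,1,2,2,2,1),(0,1,1,1,0,0),(-1,-2,-2,-3,-2,-1)), Some ((0,1,1,1,0,0),(0,1,0,1,1,0),(1,1,2,3,2,1),(-1,-2,-2,-3,-2,-1)), Some ((1,1,2,2,1,1),(0,1,0,1,1,0),(1,1,1,2,2,1),(0,0,-1,-1,0,0)), Some ((1,1,1,1,1,1),(0,1,0,1,1,0),(0,1,1,1,0,0),(-1,-2,-2,-3,-2,-1)), None, Some ((1,1,1,2,1,1),(0,1,0,1,1,0),(0,1,1,1,0,0),(-1,-2,-2,-3,-2,-1)), None, Some ((0,0,1,1,1,0),(0,1,0,1,1,0),(0,1,1,1,0,0),(0,-1,-1,-2,-1,0)), Some ((0,1,0,1,1,0),(0,0,1,1,1,0),(1,1,2,2,1,1),(0,0,-1,-1,-1,-1)), Some ((0,0,1,0,0,0),(0,1,0,1,1,0),(0,0,0,0,1,0),(-1,-1,-2,-2,-1,-1)),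 Some ((0,0,1,0,0,0),(0,1,0,1,1,0),(0,0,0,0,1,0),(-1,-1,-2,-2,-1,-1)), Some ((0,0,1,0,0,0),(0,1,0,1,1,0),(1,1,2,2,1,1),(-1,0,-1,0,0,0)), Some ((0,0,1,0,0,0),(0,1,0,1,1,0),(0,0,0,0,1,0),(-1,-1,-2,-2,-1,-1)), Some ((0,0,1,0,0,0),(0,1,0,1,1,0),(0,0,0,0,1,0),(-1,-1,-2,-2,-1,-1)), Some ((0,1,1,1,0,0),(0,1,0,1,1,0),(0,0,1,1,0,0),(-1,-1,-2,-2,-1,-1)), Some ((0,1,0,1,1,0),(0,0,1,1,0,0),(0,0,0,1,1,0),(-1,-1,-2,-2,-1,-1)), Some ((0,1,0,1,1,0),(0,0,1,1,0,0),(1,1,2,2,1,1),(-1,0,-1,-1,0,0)), Some ((0,1,0,1,1,0),(0,0,1,1,0,0),(1,1,1,2,1,1),(-1,-1,-2,-2,-1,-1)), Some ((0,1,0,1,1,0),(0,0,1,1,0,0),(1,1,1,2,1,1),(-1,-1,-2,-2,-1,-1)), Some ((0,0,1,0,0,0),(0,1,0,1,1,0),(0,0,1,1,0,0),(-1,-1,-2,-2,-1,-1)), Some ((0,0,1,0,0,0),(0,1,0,1,1,0),(0,0,1,1,0,0),(-1,-1,-2,-2,-1,-1)), None, None, Some ((1,1,2,2,1,1),(1,1,1,2,2,1),(0,1,0,0,0,0),(-1,-2,-2,-3,-2,-1)), None, Some ((1,1,1,2,1,1),(1,1,2,2,2,1),(0,1,0,0,0,0),(-1,-2,-2,-3,-2,-1)),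 Some ((0,1,1,2,2,1),(0,1,0,0,0,0),(1,1,2,2,1,0),(-1,-2,-2,-3,-2,-1)), None, Some ((1,0,1,0,0,0),(0,1,0,0,0,0),(0,0,0,0,1,1),(-1,-1,-1,-1,-1,-1)), None, Some ((0,0,0,0,1,1),(0,1,0,0,0,0),(1,1,2,2,1,0),(-1,-1,-1,-1,0,0)), Some ((0,0,0,0,1,1),(0,1,0,0,0,0),(1,1,2,2,1,0),(-1,-1,-1,-1,0,0)), Some ((1,1,1,2,1,0),(0,1,1,2,1,1),(0,1,0,0,0,0),(-1,-2,-2,-3,-2,-1)), None, Some ((0,1,0,0,0,0),(1,0,0,0,0,0),(0,0,0,0,0,1),(-1,-1,-1,-1,-1,-1)), None, Some ((0,1,1,2,1,1),(0,1,0,0,0,0),(1,0,0,0,0,0),(-1,-1,-1,-1,-1,0)), Some ((0,1,1,2,1,1),(0,1,0,0,0,0),(1,0,0,0,0,0),(-1,-1,-1,-1,-1,0)), Some ((0,0,1,0,0,0),(0,1,0,0,0,0),(0,0,0,0,1,0),(0,-1,-1,-1,-1,0)), Some ((0,0,1,0,0,0),(0,1,0,0,0,0),(1,1,2,2,1,1),(0,-1,-1,-1,-1,-1)), None, Some ((0,1,1,2,1,0),(1,1,2,2,2,1),(0,1,0,0,0,0),(-1,-2,-2,-3,-2,-1)), None, Some ((1,1,1,2,1,1),(0,1,1,2,1,0),(0,1,0,0,0,0),(-1,-2,-2,-3,-2,-1)), None, None, Some ((0,0,1,0,0,0),(0,1,0,0,0,0),(1,1,2,2,1,1),(0,-1,-1,-1,-1,-1)),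 None, None, Some ((1,1,2,2,1,1),(1,1,1,2,2,1),(0,0,0,1,0,0),(-1,-1,-2,-3,-2,-1)), None, Some ((1,0,1,1,1,1),(1,2,2,3,2,1),(0,0,0,1,0,0),(-1,-1,-2,-3,-2,-1)), Some ((0,1,1,2,2,1),(0,0,0,1,0,0),(1,1,2,2,1,0),(-1,-1,-2,-3,-2,-1)), None, Some ((0,0,1,1,1,1),(1,0,1,1,1,0),(0,0,0,1,0,0),(-1,-1,-2,-3,-2,-1)), None, Some ((1,1,1,1,0,0),(0,1,0,1,1,1),(0,0,0,1,0,0),(-1,-1,-1,-2,-1,-1)), None, Some ((0,0,0,1,0,0),(1,1,2,2,1,0),(1,1,1,1,0,0),(-1,-1,-1,-2,-1,0)), Some ((0,0,0,1,0,0),(1,1,2,2,1,0),(1,1,1,1,0,0),(-1,-1,-1,-2,-1,0)), Some ((1,0,0,0,0,0),(0,0,0,0,0,1),(0,0,0,1,0,0),(-1,-1,-1,-2,-1,-1)), None, Some ((0,0,1,1,1,1),(1,0,0,0,0,0),(0,0,0,1,0,0),(-1,-1,-1,-2,-1,0)), Some ((0,0,1,1,1,1),(1,2,2,3,2,1),(1,0,0,0,0,0),(-1,-1,-1,-2,-1,0)), None, Some ((0,0,1,1,1,0),(1,2,2,3,2,1),(0,0,0,1,0,0),(-1,-1,-2,-3,-2,-1)), None, Some ((0,0,1,1,1,0),(1,0,1,1,1,1),(0,0,0,1,0,0),(-1,-1,-2,-3,-2,-1)), None, Some ((0,1,0,1,1,0),(0,0,0,1,0,0),(0,1,1,1,0,0),(0,-1,-1,-2,-1,0)),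 Some ((0,1,0,1,1,0),(1,1,2,2,1,1),(1,1,1,2,2,1),(0,0,-1,-1,0,0)), None, Some ((0,1,0,1,1,0),(0,0,1,1,1,0),(1,1,2,2,1,1),(0,0,-1,-1,-1,-1)), None, None, Some ((1,1,2,2,1,1),(1,1,1,2,2,1),(0,1,0,1,0,0),(-1,-2,-2,-3,-2,-1)), None, Some ((1,1,1,1,1,1),(0,1,0,1,0,0),(1,1,2,3,2,1),(-1,-2,-2,-3,-2,-1)), Some ((0,1,0,1,0,0),(0,1,1,2,2,1),(1,1,2,2,1,0),(-1,-2,-2,-3,-2,-1)), None, Some ((0,1,1,1,1,1),(1,1,1,1,1,0),(0,1,0,1,0,0),(-1,-2,-2,-3,-2,-1)), None, Some ((0,0,0,1,1,1),(1,0,1,1,0,0),(0,1,0,1,0,0),(-1,-1,-1,-2,-1,-1)), None, Some ((1,0,1,1,0,0),(0,1,0,1,0,0),(1,1,2,2,1,0),(-1,-1,-1,-2,-1,0)), Some ((1,0,1,1,0,0),(0,1,0,1,0,0),(1,1,2,2,1,0),(-1,-1,-1,-2,-1,0)), Some ((1,0,0,0,0,0),(0,0,0,0,0,1),(0,1,0,1,0,0),(-1,-1,-1,-2,-1,-1)), None, Some ((1,1,1,1,1,0),(1,0,0,0,0,0),(0,1,0,1,0,0),(-1,-1,-1,-2,-1,0)), Some ((1,1,1,1,1,0),(1,0,0,0,0,0),(0,1,0,1,0,0),(-1,-1,-1,-2,-1,0)), None, Some ((0,1,0,1,0,0),(0,1,1,1,1,0),(1,1,2,3,2,1),(-1,-2,-2,-3,-2,-1)),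 None, Some ((1,1,1,1,1,1),(0,1,1,1,1,0),(0,1,0,1,0,0),(-1,-2,-2,-3,-2,-1)), None, Some ((0,1,0,1,0,0),(0,0,1,1,0,0),(0,0,0,1,1,0),(0,-1,-1,-2,-1,0)), Some ((0,0,1,1,0,0),(1,1,2,2,1,1),(1,1,1,2,2,1),(0,-1,-1,-1,0,0)), None, Some ((0,1,1,1,1,0),(0,0,1,1,0,0),(1,1,2,2,1,1),(-1,-1,-2,-2,-1,0))]"

fun chain_ok :: "('i \<Rightarrow> bool) \<Rightarrow> ('i \<Rightarrow> 'a \<Rightarrow> 'a) \<Rightarrow> 'a list \<Rightarrow> ('a \<times> 'i \<times> 'a) list \<Rightarrow> bool" where
  "chain_ok A f K [] = True"
| "chain_ok A f K ((c,i,p) # L) \<longleftrightarrow> p \<in> set K \<and> A i \<and> c = f i p \<and> chain_ok A f (c # K) L"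

lemma chain_ok_invariant:
  assumes "chain_ok A f K L" "\<forall>x\<in>set K. P x" "\<And>i x. A i \<Longrightarrow> P x \<Longrightarrow> P (f i x)"
  shows "\<forall>x\<in>set (map fst L). P x"
  using assms by (induction A f K L rule: chain_ok.induct) auto

definition class_members :: "v4 list \<times> (v4 list \<times> v4 \<times> v4 list) list \<Rightarrow> v4 list list" where
  "class_members cl = fst cl # map fst (snd cl)"

fun orth_lists :: "v4 list \<Rightarrow> v4 list list" where
  "orth_lists [] = [[]]"
| "orth_lists (x # xs) = orth_lists xs @ map ((#) x) (orth_lists (filter (\<lambda>y. ip4i x y = 0) xs))"

definition adm_target :: "v6 \<Rightarrow> v6 \<Rightarrow> v6 \<Rightarrow> v6 \<Rightarrow> v6" where
  "adm_target g g1 g2 g3 =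
     sub6 (sub6 (sub6 (smul6 2 g) (smul6 (ip6i g g1) g1)) (smul6 (ip6i g g2) g2)) (smul6 (ip6i g g3) g3)"

definition odd_partners :: "v6 list \<Rightarrow> v6 \<Rightarrow> v6 list" where
  "odd_partners C g = filter (\<lambda>c. ip6i g c = 1 \<or> ip6i g c = -1) C"

definition distinct_triples :: "'a list \<Rightarrow> ('a \<times> 'a \<times> 'a) list" where
  "distinct_triples xs = [(a,b,c). a \<leftarrow> xs, b \<leftarrow> xs, c \<leftarrow> xs, a \<noteq> b \<and> a \<noteq> c \<and> b \<noteq> c]"

lemma list_all_distinct_triples:
  "list_all (\<lambda>(a,b,c). Q a b c) (distinct_triples xs) \<longleftrightarrow>
     (\<forall>a\<in>set xs. \<forall>b\<in>set xs. \<forall>c\<in>set xs. a \<noteq> b \<and> a \<noteq> c \<and> b \<noteq> c \<longrightarrow> Q a b c)"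
  by (auto simp: distinct_triples_def list_all_iff)
definition adm_closed_at :: "v6 list \<Rightarrow> v6 \<Rightarrow> bool" where
  "adm_closed_at C g \<longleftrightarrow>
     list_all (\<lambda>(g1,g2,g3). pos6 (adm_target g g1 g2 g3) \<in> set C) (distinct_triples (odd_partners C g))"

definition adm6 :: "v6 list \<Rightarrow> bool" where
  "adm6 C \<longleftrightarrow> set C \<subseteq> set phi_pos \<and> (\<forall>g1\<in>set C. \<forall>g2\<in>set C. g1 \<noteq> g2 \<longrightarrow> ip6i g1 g2 = 0)
     \<and> list_all (adm_closed_at C) phi_all"

definition adm6_violation :: "v6 list \<Rightarrow> v6 \<times> v6 \<times> v6 \<times> v6 \<Rightarrow> bool" where
  "adm6_violation C w \<longleftrightarrow> (case w of (g1,g2,g3,g) \<Rightarrow>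
       g1 \<in> set C \<and> g2 \<in> set C \<and> g3 \<in> set C \<and> g1 \<noteq> g2 \<and> g1 \<noteq> g3 \<and> g2 \<noteq> g3
       \<and> g \<in> set phi_all \<and> ip6i g g1 \<in> {1,-1} \<and> ip6i g g2 \<in> {1,-1} \<and> ip6i g g3 \<in> {1,-1}
       \<and> pos6 (adm_target g g1 g2 g3) \<notin> set C)"

definition preim6 :: "v4 list \<Rightarrow> v6 list" where
  "preim6 T = filter (\<lambda>v. proj6 v \<in> set T) phi_pos"

text \<open>Numbers of long (squared length 2) and short (squared length 1) roots.\<close>
definition shape4 :: "v4 list \<Rightarrow> nat \<times> nat" where
  "shape4 ys = (card (set (filter (\<lambda>v. ip4i v v = 8) ys)), card (set (filter (\<lambda>v. ip4i v v = 4) ys)))"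

lemma cert_psi_forms:
  "(\<forall>k\<in>{1,-1}. \<forall>i\<in>{1,2,3,4}. unit4 (2*k) i \<in> set psi_all)
   \<and> (\<forall>k\<in>{1,-1}. \<forall>m\<in>{1,-1}. \<forall>i\<in>{1,2,3,4}. \<forall>j\<in>{1,2,3,4}.
        i < j \<longrightarrow> add4 (unit4 (2*k) i) (unit4 (2*m) j) \<in> set psi_all)
   \<and> (\<forall>a\<in>{1,-1}. \<forall>b\<in>{1,-1}. \<forall>c\<in>{1,-1}. \<forall>d\<in>{1,-1}. (a,b,c,d) \<in> set psi_all)"
  by code_simp

lemma cert_cone: "\<forall>v\<in>set psi_all. in_cone4 v \<longleftrightarrow> v \<in> set psi_pos"
  by code_simp

lemma cert_psi_pos_neg: "\<forall>v\<in>set psi_pos. smul4 (-1) v \<notin> set psi_pos"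
  by code_simp

lemma cert_root_lengths: "\<forall>v\<in>set psi_pos. ip4i v v = 4 \<or> ip4i v v = 8"
  by code_simp

lemma cert_psi_refl:
  "\<forall>r\<in>set psi_pos. \<forall>v\<in>set psi_pos. refl4i r v \<in> set psi_all \<and> ip4i r r dvd 2 * ip4i v r"
  by code_simp

lemma cert_pos4: "\<forall>v\<in>set psi_all. pos4 v \<in> set psi_pos"
  by code_simp

lemma cert_phi_refl:
  "\<forall>i\<in>set [1,2,3,4,5,6]. unit6 i \<in> set phi_all \<and> (\<forall>v\<in>set phi_all. refl6i i v \<in> set phi_all)"
  by code_simp

lemma cert_phi_chain:
  "chain_ok (\<lambda>i. i \<in> {1..6}) refl6i (map unit6 [1,2,3,4,5,6]) phi_chain
   \<and> set phi_all \<subseteq> set (map unit6 [1,2,3,4,5,6]) \<union> set (map fst phi_chain)"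
  by code_simp

lemma cert_phi_pos: "filter nonneg6 phi_all = phi_pos"
  by code_simp

lemma cert_sigma: "\<forall>v\<in>set phi_pos. sigma6 v \<in> set phi_pos \<and> proj6 (sigma6 v) = proj6 v"
  by code_simp

lemma cert_fibres: "\<forall>v\<in>set phi_pos. \<forall>b\<in>set phi_pos. proj6 v = proj6 b \<longrightarrow> v = b \<or> v = sigma6 b"
  by code_simp

lemma cert_proj_image: "proj6 ` set phi_pos = set psi_pos"
  by code_simp

lemma cert_reps:
  "\<forall>R\<in>set orbit_reps. set R \<subseteq> set psi_pos
     \<and> (\<forall>u\<in>set R. \<forall>v\<in>set R. u \<noteq> v \<longrightarrow> ip4i u v = 0) \<and> adm6 (preim6 R)"
  by code_simp

lemma cert_class_reps: "map fst orbit_classes = orbit_reps"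
  by code_simp

lemma cert_chains:
  "\<forall>cl\<in>set orbit_classes.
     chain_ok (\<lambda>r. r \<in> set psi_pos) (\<lambda>r U. map (pos4 \<circ> refl4i r) U) [fst cl] (snd cl)"
  by code_simp

lemma cert_shape_classes:
  "\<forall>ys\<in>set (orth_lists psi_pos). \<forall>cl\<in>set orbit_classes.
     shape4 ys = shape4 (fst cl) \<longrightarrow> set ys \<in> set (map set (class_members cl))"
  by code_simp

lemma cert_classification:
  "list_all2 (\<lambda>ys w. case w of
        None \<Rightarrow> (\<exists>cl\<in>set orbit_classes. shape4 ys = shape4 (fst cl))
      | Some w \<Rightarrow> adm6_violation (preim6 ys) w) (orth_lists psi_pos) witnesses"
  by code_simp

lemma cert_class_sizes:
  "map (\<lambda>cl. card (set (map set (class_members cl)))) orbit_classes = [1, 12, 12, 18, 36, 3]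
   \<and> card (set (map (\<lambda>cl. set (map set (class_members cl))) orbit_classes)) = 6"
  by code_simp

fun vec4 :: "v4 \<Rightarrow> vec" where
  "vec4 (a,b,c,d) = (\<lambda>k. if k = 1 then of_int a / 2 else if k = 2 then of_int b / 2
      else if k = 3 then of_int c / 2 else if k = 4 then of_int d / 2 else 0)"

fun vec6 :: "v6 \<Rightarrow> vec" where
  "vec6 (a1,a2,a3,a4,a5,a6) = (\<lambda>k. if k = 1 then of_int a1 else if k = 2 then of_int a2
      else if k = 3 then of_int a3 else if k = 4 then of_int a4 else if k = 5 then of_int a5
      else if k = 6 then of_int a6 else 0)"

declare vec4.simps [simp del] vec6.simps [simp del]

lemma vec4_eq_iff: "vec4 u = vec4 v \<longleftrightarrow> u = v"
proof
  assume h: "vec4 u = vec4 v"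
  obtain a b c d where u: "u = (a,b,c,d)" by (cases u) auto
  obtain a' b' c' d' where v: "v = (a',b',c',d')" by (cases v) auto
  have "vec4 u k = vec4 v k" for k using h by simp
  from this[of 1] this[of 2] this[of 3] this[of 4] show "u = v" unfolding u v by (simp add: vec4.simps)
qed simp

lemma vec6_eq_iff: "vec6 u = vec6 v \<longleftrightarrow> u = v"
proof
  assume h: "vec6 u = vec6 v"
  obtain a1 a2 a3 a4 a5 a6 where u: "u = (a1,a2,a3,a4,a5,a6)" by (cases u) auto
  obtain b1 b2 b3 b4 b5 b6 where v: "v = (b1,b2,b3,b4,b5,b6)" by (cases v) auto
  have "vec6 u k = vec6 v k" for k using h by simp
  from this[of 1] this[of 2] this[of 3] this[of 4] this[of 5] this[of 6]
  show "u = v" unfolding u v by (simp add: vec6.simps)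
qed simp

lemma inj_vec4: "inj vec4" by (simp add: inj_def vec4_eq_iff)
lemma inj_vec6: "inj vec6" by (simp add: inj_def vec6_eq_iff)

lemma vadd_vec4: "vadd (vec4 u) (vec4 v) = vec4 (add4 u v)"
  by (cases u; cases v) (auto simp: vec4.simps vadd_def add_divide_distrib)
lemma vsub_vec4: "vsub (vec4 u) (vec4 v) = vec4 (sub4 u v)"
  by (cases u; cases v) (auto simp: vec4.simps vsub_def diff_divide_distrib)
lemma vsc_vec4: "vsc (of_int k) (vec4 v) = vec4 (smul4 k v)"
  by (cases v) (auto simp: vec4.simps vsc_def)
lemma vneg_vec4: "vneg (vec4 v) = vec4 (smul4 (-1) v)"
  by (cases v) (auto simp: vec4.simps vneg_def)

lemma vsub_vec6: "vsub (vec6 u) (vec6 v) = vec6 (sub6 u v)"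
  by (cases u; cases v) (auto simp: vec6.simps vsub_def)
lemma vsc_vec6: "vsc (of_int k) (vec6 v) = vec6 (smul6 k v)"
  by (cases v) (auto simp: vec6.simps vsc_def)
lemma vneg_vec6: "vneg (vec6 v) = vec6 (smul6 (-1) v)"
  by (cases v) (auto simp: vec6.simps vneg_def)

lemma sum_1_4: "(\<Sum>k\<in>{1..4::nat}. f k) = f 1 + f 2 + f 3 + f 4"
  by (simp add: numeral_eq_Suc add.assoc)

lemma sum_1_6: "(\<Sum>k\<in>{1..6::nat}. f k) = f 1 + f 2 + f 3 + f 4 + f 5 + f 6"
  by (simp add: numeral_eq_Suc add.assoc)

lemma ip4_vec4: "ip4 (vec4 u) (vec4 v) = of_int (ip4i u v) / 4"
  unfolding ip4_def sum_1_4 by (cases u; cases v) (simp add: vec4.simps field_simps)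

lemma cartanE_table:
  "cartanE 1 1 = 2" "cartanE 1 2 = 0" "cartanE 1 3 = -1" "cartanE 1 4 = 0" "cartanE 1 5 = 0" "cartanE 1 6 = 0"
  "cartanE 2 1 = 0" "cartanE 2 2 = 2" "cartanE 2 3 = 0" "cartanE 2 4 = -1" "cartanE 2 5 = 0" "cartanE 2 6 = 0"
  "cartanE 3 1 = -1" "cartanE 3 2 = 0" "cartanE 3 3 = 2" "cartanE 3 4 = -1" "cartanE 3 5 = 0" "cartanE 3 6 = 0"
  "cartanE 4 1 = 0" "cartanE 4 2 = -1" "cartanE 4 3 = -1" "cartanE 4 4 = 2" "cartanE 4 5 = -1" "cartanE 4 6 = 0"
  "cartanE 5 1 = 0" "cartanE 5 2 = 0" "cartanE 5 3 = 0" "cartanE 5 4 = -1" "cartanE 5 5 = 2" "cartanE 5 6 = -1"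
  "cartanE 6 1 = 0" "cartanE 6 2 = 0" "cartanE 6 3 = 0" "cartanE 6 4 = 0" "cartanE 6 5 = -1" "cartanE 6 6 = 2"
  by (simp_all add: cartanE_def doubleton_eq_iff)

lemma ipE_vec6: "ipE (vec6 u) (vec6 v) = of_int (ip6i u v)"
  unfolding ipE_def sum_1_6 cartanE_table by (cases u; cases v) (simp add: vec6.simps algebra_simps)

lemma sigmaE_vec6: "sigmaE (vec6 v) = vec6 (sigma6 v)"
  by (cases v) (auto simp: vec6.simps sigmaE_def sperm_def)

lemma eps_vec4: "eps 1 = vec4 (2,0,0,0)" "eps 2 = vec4 (0,2,0,0)" "eps 3 = vec4 (0,0,2,0)"
  "eps 4 = vec4 (0,0,0,2)"
  by (auto simp: vec4.simps eps_def)

lemma beta_vec4: "beta1 = vec4 (1,-1,-1,-1)" "beta2 = vec4 (0,2,0,0)" "beta3 = vec4 (0,-2,2,0)"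
  "beta4 = vec4 (0,0,-2,2)"
  by (auto simp: vec4.simps beta1_def beta2_def beta3_def beta4_def eps_def vsc_def vsub_def)

lemma pE_vec6: "pE (vec6 v) = vec4 (proj6 v)"
  by (cases v) (auto simp: vec4.simps vec6.simps pE_def beta_vec4 vadd_def vsc_def field_simps)

lemma refl4_vec4:
  assumes "ip4i r r \<noteq> 0" "ip4i r r dvd 2 * ip4i v r"
  shows "refl4 (vec4 r) (vec4 v) = vec4 (refl4i r v)"
proof -
  obtain q where q: "2 * ip4i v r = ip4i r r * q" using assms(2) by (auto simp: dvd_def)
  have "2 * ip4 (vec4 v) (vec4 r) / ip4 (vec4 r) (vec4 r) = of_int (2 * ip4i v r) / of_int (ip4i r r)"
    by (simp add: ip4_vec4)
  also have "\<dots> = of_int q" using assms(1) by (simp add: q)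
  also have "q = 2 * ip4i v r div ip4i r r" using assms(1) by (simp add: q)
  finally show ?thesis by (simp add: refl4_def refl4i_def vsc_vec4 vsub_vec4)
qed

lemma alphaE_vec6: "i \<in> {1..6} \<Longrightarrow> alphaE i = vec6 (unit6 i)"
  by (auto simp: fun_eq_iff alphaE_def vec6.simps)

lemma refl6_vec6:
  assumes "i \<in> {1..6}"
  shows "reflE (alphaE i) (vec6 v) = vec6 (refl6i i v)"
proof -
  have "ip6i (unit6 i) (unit6 i) = 2" using assms by auto
  then show ?thesis
    by (simp add: reflE_def alphaE_vec6[OF assms] ipE_vec6 vsc_vec6 vsub_vec6 refl6i_def
        del: unit6.simps)
qed

section \<open>The root system F4 in integer coordinates\<close>

lemma Psi_short_axis:
  assumes "a \<in> {2,-2}"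
  shows "vec4 (a,0,0,0) \<in> Psi" "vec4 (0,a,0,0) \<in> Psi" "vec4 (0,0,a,0) \<in> Psi" "vec4 (0,0,0,a) \<in> Psi"
proof -
  have s: "of_int a / 2 \<in> {1,-1::real}" using assms by auto
  have in_Psi: "i \<in> {1..4} \<Longrightarrow> vsc (of_int a / 2) (eps i) \<in> Psi" for i
    unfolding Psi_def using s by blast
  have "vec4 (a,0,0,0) = vsc (of_int a / 2) (eps 1)" "vec4 (0,a,0,0) = vsc (of_int a / 2) (eps 2)"
    "vec4 (0,0,a,0) = vsc (of_int a / 2) (eps 3)" "vec4 (0,0,0,a) = vsc (of_int a / 2) (eps 4)"
    by (auto simp: fun_eq_iff vsc_def eps_def vec4.simps)
  then show "vec4 (a,0,0,0) \<in> Psi" "vec4 (0,a,0,0) \<in> Psi" "vec4 (0,0,a,0) \<in> Psi" "vec4 (0,0,0,a) \<in> Psi"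
    using in_Psi[of 1] in_Psi[of 2] in_Psi[of 3] in_Psi[of 4] by auto
qed

lemma Psi_long:
  assumes "a \<in> {2,-2}" "b \<in> {2,-2}"
  shows "vec4 (a,b,0,0) \<in> Psi" "vec4 (a,0,b,0) \<in> Psi" "vec4 (a,0,0,b) \<in> Psi"
        "vec4 (0,a,b,0) \<in> Psi" "vec4 (0,a,0,b) \<in> Psi" "vec4 (0,0,a,b) \<in> Psi"
proof -
  have s: "of_int a / 2 \<in> {1,-1::real}" "of_int b / 2 \<in> {1,-1::real}" using assms by auto
  have in_Psi: "1 \<le> i \<Longrightarrow> i < j \<Longrightarrow> j \<le> 4 \<Longrightarrow>
      vadd (vsc (of_int a / 2) (eps i)) (vsc (of_int b / 2) (eps j)) \<in> Psi" for i j
    unfolding Psi_def using s by blast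
  have "vec4 (a,b,0,0) = vadd (vsc (of_int a / 2) (eps 1)) (vsc (of_int b / 2) (eps 2))"
    "vec4 (a,0,b,0) = vadd (vsc (of_int a / 2) (eps 1)) (vsc (of_int b / 2) (eps 3))"
    "vec4 (a,0,0,b) = vadd (vsc (of_int a / 2) (eps 1)) (vsc (of_int b / 2) (eps 4))"
    "vec4 (0,a,b,0) = vadd (vsc (of_int a / 2) (eps 2)) (vsc (of_int b / 2) (eps 3))"
    "vec4 (0,a,0,b) = vadd (vsc (of_int a / 2) (eps 2)) (vsc (of_int b / 2) (eps 4))"
    "vec4 (0,0,a,b) = vadd (vsc (of_int a / 2) (eps 3)) (vsc (of_int b / 2) (eps 4))"
    by (auto simp: fun_eq_iff vsc_def eps_def vadd_def vec4.simps)
  then show "vec4 (a,b,0,0) \<in> Psi" "vec4 (a,0,b,0) \<in> Psi" "vec4 (a,0,0,b) \<in> Psi"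
       "vec4 (0,a,b,0) \<in> Psi" "vec4 (0,a,0,b) \<in> Psi" "vec4 (0,0,a,b) \<in> Psi"
    using in_Psi[of 1 2] in_Psi[of 1 3] in_Psi[of 1 4] in_Psi[of 2 3] in_Psi[of 2 4] in_Psi[of 3 4]
    by auto
qed

lemma Psi_half:
  assumes "a \<in> {1,-1}" "b \<in> {1,-1}" "c \<in> {1,-1}" "d \<in> {1,-1}"
  shows "vec4 (a,b,c,d) \<in> Psi"
proof -
  define s :: "nat \<Rightarrow> real" where "s = (\<lambda>k. if k = 1 then of_int a else if k = 2 then of_int b
     else if k = 3 then of_int c else of_int d)"
  have "\<forall>k\<in>{1..4}. s k \<in> {1,-1}" using assms by (auto simp: s_def)
  moreover have "vec4 (a,b,c,d) = (\<lambda>k. if k \<in> {1..4} then s k / 2 else 0)"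
    by (auto simp: fun_eq_iff s_def vec4.simps)
  ultimately show ?thesis unfolding Psi_def by blast
qed

lemma vsc_eps_vec4: "i \<in> {1..4} \<Longrightarrow> vsc (of_int k) (eps i) = vec4 (unit4 (2*k) i)"
  by (auto simp: fun_eq_iff vsc_def eps_def vec4.simps)

lemma sign_real_int: "(s::real) \<in> {1,-1} \<Longrightarrow> \<exists>k::int. k \<in> {1,-1} \<and> s = of_int k"
  by (auto intro: exI[of _ 1] exI[of _ "-1"])

lemma Psi_eq: "Psi = vec4 ` set psi_all"
proof
  show "vec4 ` set psi_all \<subseteq> Psi"
    unfolding psi_all_def psi_pos_def by (simp add: Psi_short_axis Psi_long Psi_half)
  show "Psi \<subseteq> vec4 ` set psi_all"
  proof
    fix x assume "x \<in> Psi"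
    then consider (short) s i where "s \<in> {1,-1}" "i \<in> {1..4}" "x = vsc s (eps i)"
      | (long) s t i j where "s \<in> {1,-1}" "t \<in> {1,-1}" "1 \<le> i" "i < j" "j \<le> 4"
          "x = vadd (vsc s (eps i)) (vsc t (eps j))"
      | (half) s where "\<forall>k\<in>{1..4}. s k \<in> {1,-1}" "x = (\<lambda>k. if k \<in> {1..4} then s k / 2 else 0)"
      unfolding Psi_def by blast
    then show "x \<in> vec4 ` set psi_all"
    proof cases
      case short
      obtain k where k: "k \<in> {1,-1}" "s = of_int k" using sign_real_int[OF short(1)] by blast
      have "i \<in> {1,2,3,4}" using short(2) by auto
      then have "unit4 (2*k) i \<in> set psi_all" using cert_psi_forms k(1) by blast
      then show ?thesis using k short vsc_eps_vec4[OF short(2), of k] by auto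
    next
      case long
      obtain k where k: "k \<in> {1,-1}" "s = of_int k" using sign_real_int[OF long(1)] by blast
      obtain m where m: "m \<in> {1,-1}" "t = of_int m" using sign_real_int[OF long(2)] by blast
      have x: "x = vec4 (add4 (unit4 (2*k) i) (unit4 (2*m) j))" using long k m
        by (simp add: vsc_eps_vec4 vadd_vec4)
      have "i \<in> {1,2,3,4}" "j \<in> {1,2,3,4}" "i < j" using long(3-5) by auto
      then have "add4 (unit4 (2*k) i) (unit4 (2*m) j) \<in> set psi_all"
        using cert_psi_forms k(1) m(1) by blast
      then show ?thesis unfolding x by auto
    next
      case half
      have "s 1 \<in> {1,-1}" "s 2 \<in> {1,-1}" "s 3 \<in> {1,-1}" "s 4 \<in> {1,-1}" using half(1) by auto
      then obtain a b c d where abcd: "a \<in> {1,-1}" "b \<in> {1,-1}" "c \<in> {1,-1}" "d \<in> {1,-1}"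
        "s 1 = of_int a" "s 2 = of_int b" "s 3 = of_int c" "s 4 = of_int d"
        using sign_real_int by meson
      have x: "x = vec4 (a,b,c,d)" unfolding half(2) using abcd(5-8)
        by (auto simp: fun_eq_iff vec4.simps)
      have "(a,b,c,d) \<in> set psi_all" using abcd(1-4) cert_psi_forms by blast
      then show ?thesis unfolding x by auto
    qed
  qed
qed


lemma cone_coordinates:
  "vadd (vsc a beta1) (vadd (vsc b beta2) (vadd (vsc c beta3) (vsc d beta4))) =
    (\<lambda>k. if k = 1 then a/2 else if k = 2 then -a/2 + b - c else if k = 3 then -a/2 + c - d
       else if k = 4 then -a/2 + d else 0)"
  by (auto simp: fun_eq_iff vadd_def vsc_def beta_vec4 vec4.simps field_simps)

lemma in_cone_vec4:
  "(\<exists>a b c d. a \<ge> 0 \<and> b \<ge> 0 \<and> c \<ge> 0 \<and> d \<ge> 0 \<and>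
      vec4 v = vadd (vsc a beta1) (vadd (vsc b beta2) (vadd (vsc c beta3) (vsc d beta4))))
   \<longleftrightarrow> in_cone4 v"
proof -
  obtain p q r s where v: "v = (p,q,r,s)" by (cases v) auto
  show ?thesis
  proof
    assume "\<exists>a b c d. a \<ge> 0 \<and> b \<ge> 0 \<and> c \<ge> 0 \<and> d \<ge> 0 \<and>
      vec4 v = vadd (vsc a beta1) (vadd (vsc b beta2) (vadd (vsc c beta3) (vsc d beta4)))"
    then obtain a b c d where nonneg: "a \<ge> 0" "b \<ge> 0" "c \<ge> 0" "d \<ge> 0"
      and eq: "vec4 v = vadd (vsc a beta1) (vadd (vsc b beta2) (vadd (vsc c beta3) (vsc d beta4)))"
      by blast
    have "of_int p / 2 = a/2" "of_int q / 2 = -a/2 + b - c" "of_int r / 2 = -a/2 + c - d"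
      "of_int s / 2 = -a/2 + d"
      using fun_cong[OF eq, of 1] fun_cong[OF eq, of 2] fun_cong[OF eq, of 3] fun_cong[OF eq, of 4]
      by (simp_all add: cone_coordinates v vec4.simps)
    then have "real_of_int p \<ge> 0" "real_of_int p + of_int s \<ge> 0"
      "2 * real_of_int p + of_int r + of_int s \<ge> 0"
      "3 * real_of_int p + of_int q + of_int r + of_int s \<ge> 0"
      using nonneg by linarith+
    then show "in_cone4 v" unfolding v by simp
  next
    assume "in_cone4 v"
    then have "0 \<le> p" "0 \<le> p+s" "0 \<le> 2*p+r+s" "0 \<le> 3*p+q+r+s" by (simp_all add: v)
    then show "\<exists>a b c d. a \<ge> 0 \<and> b \<ge> 0 \<and> c \<ge> 0 \<and> d \<ge> 0 \<and>
        vec4 v = vadd (vsc a beta1) (vadd (vsc b beta2) (vadd (vsc c beta3) (vsc d beta4)))"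
      by (intro exI[of _ "of_int p"] exI[of _ "of_int (3*p+q+r+s)/2"]
          exI[of _ "of_int (2*p+r+s)/2"] exI[of _ "of_int (p+s)/2"])
         (auto simp: cone_coordinates v vec4.simps fun_eq_iff field_simps)
  qed
qed

lemma PsiPlus_eq: "PsiPlus = vec4 ` set psi_pos"
proof -
  have "PsiPlus = vec4 ` {v \<in> set psi_all. in_cone4 v}"
    unfolding PsiPlus_def Psi_eq using in_cone_vec4 by blast
  also have "{v \<in> set psi_all. in_cone4 v} = set psi_pos"
    using cert_cone by (auto simp: psi_all_def)
  finally show ?thesis .
qed

lemma vec4_in_PsiPlus: "vec4 v \<in> PsiPlus \<longleftrightarrow> v \<in> set psi_pos"
  by (simp add: PsiPlus_eq inj_image_mem_iff[OF inj_vec4])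

lemma vec4_in_Psi: "vec4 v \<in> Psi \<longleftrightarrow> v \<in> set psi_all"
  by (simp add: Psi_eq inj_image_mem_iff[OF inj_vec4])

lemma PsiPlus_sub_Psi: "PsiPlus \<subseteq> Psi" unfolding PsiPlus_def by blast

lemma posF_vec4: "posF (vec4 v) = vec4 (pos4 v)"
  by (simp add: posF_def pos4_def vec4_in_PsiPlus vneg_vec4)

lemma smul4_neg_neg [simp]: "smul4 (-1) (smul4 (-1) v) = v"
  by (cases v) simp

lemma vneg_vneg [simp]: "vneg (vneg v) = v" by (simp add: vneg_def)

lemma vneg_eq_iff: "vneg x = vneg y \<longleftrightarrow> x = y" by (metis vneg_vneg)

lemma Psi_cases: "x \<in> Psi \<Longrightarrow> \<exists>u\<in>set psi_pos. x = vec4 u \<or> x = vneg (vec4 u)"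
  unfolding Psi_eq psi_all_def by (auto simp: vneg_vec4 simp del: smul4.simps)

lemma PsiPlus_vneg: "x \<in> PsiPlus \<Longrightarrow> vneg x \<notin> PsiPlus"
proof
  assume x: "x \<in> PsiPlus" and nx: "vneg x \<in> PsiPlus"
  obtain u where u: "u \<in> set psi_pos" "x = vec4 u" using x by (auto simp: PsiPlus_eq)
  have "smul4 (-1) u \<in> set psi_pos"
    using nx u(2) by (simp add: vneg_vec4 vec4_in_PsiPlus del: smul4.simps)
  then show False using cert_psi_pos_neg u(1) by blast
qed

lemma Psi_not_plus: "x \<in> Psi \<Longrightarrow> x \<notin> PsiPlus \<Longrightarrow> vneg x \<in> PsiPlus"
  using Psi_cases[of x] by (auto simp: PsiPlus_eq)

lemma Psi_vneg: "x \<in> Psi \<Longrightarrow> vneg x \<in> Psi"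
proof -
  assume "x \<in> Psi"
  then obtain u where u: "u \<in> set psi_pos" "x = vec4 u \<or> x = vneg (vec4 u)"
    using Psi_cases by blast
  have "u \<in> set psi_all" "smul4 (-1) u \<in> set psi_all" using u(1) by (simp_all add: psi_all_def)
  then show ?thesis using u(2) by (auto simp: vneg_vec4 vec4_in_Psi simp del: smul4.simps)
qed

lemma posF_vneg: "x \<in> Psi \<Longrightarrow> posF (vneg x) = posF x"
  using PsiPlus_vneg Psi_not_plus by (auto simp: posF_def)

lemma posF_in_PsiPlus: "x \<in> Psi \<Longrightarrow> posF x \<in> PsiPlus"
  using Psi_not_plus by (auto simp: posF_def)

lemma posF_eq_iff: "x \<in> Psi \<Longrightarrow> y \<in> Psi \<Longrightarrow> posF x = posF y \<Longrightarrow> x = y \<or> x = vneg y"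
  by (auto simp: posF_def vneg_eq_iff split: if_splits)

lemma ip4_posF: "ip4 (posF x) (posF y) = ip4 x y \<or> ip4 (posF x) (posF y) = - ip4 x y"
  and ip4_posF_self: "ip4 (posF x) (posF x) = ip4 x x"
  by (auto simp: posF_def ip4_def vneg_def sum_negf)

section \<open>The Weyl group W(F4) and its action on subsets of Psi+\<close>

lemma ip4_vsub_vsc: "ip4 (vsub u (vsc c r)) v = ip4 u v - c * ip4 r v"
  by (simp add: ip4_def vsub_def vsc_def algebra_simps sum_subtractf sum_distrib_left)

lemma ip4_vsub_vsc2: "ip4 v (vsub u (vsc c r)) = ip4 v u - c * ip4 v r"
  by (simp add: ip4_def vsub_def vsc_def algebra_simps sum_subtractf sum_distrib_left)

lemma ip4_sym: "ip4 u v = ip4 v u" by (simp add: ip4_def mult.commute)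

lemma ip4_vneg: "ip4 (vneg u) v = - ip4 u v" "ip4 u (vneg v) = - ip4 u v"
  by (simp_all add: ip4_def vneg_def sum_negf)

lemma ip4_Psi_nonzero: "r \<in> Psi \<Longrightarrow> ip4 r r \<noteq> 0"
proof -
  assume "r \<in> Psi"
  then obtain u where u: "u \<in> set psi_pos" "r = vec4 u \<or> r = vneg (vec4 u)"
    using Psi_cases by blast
  then have "ip4 r r = of_int (ip4i u u) / 4" by (auto simp: ip4_vneg ip4_vec4)
  then show ?thesis using cert_root_lengths u(1) by auto
qed

lemma refl4_vneg: "refl4 r (vneg v) = vneg (refl4 r v)"
  unfolding refl4_def ip4_vneg by (simp add: fun_eq_iff vsub_def vsc_def vneg_def)

lemma refl4_vneg_root: "refl4 (vneg r) = refl4 r"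
  unfolding refl4_def ip4_vneg by (simp add: fun_eq_iff vsub_def vsc_def vneg_def)

lemma refl4_involutive: "ip4 r r \<noteq> 0 \<Longrightarrow> refl4 r (refl4 r v) = v"
proof -
  assume nz: "ip4 r r \<noteq> 0"
  have "2 * ip4 (refl4 r v) r / ip4 r r = - (2 * ip4 v r / ip4 r r)"
    unfolding refl4_def ip4_vsub_vsc using nz by (simp add: field_simps)
  then show ?thesis unfolding refl4_def[of r "refl4 r v"]
    by (simp add: refl4_def fun_eq_iff vsub_def vsc_def)
qed

lemma refl4_ip: "ip4 r r \<noteq> 0 \<Longrightarrow> ip4 (refl4 r u) (refl4 r v) = ip4 u v"
  unfolding refl4_def
  by (simp add: ip4_vsub_vsc ip4_vsub_vsc2 field_simps ip4_sym[of r u] ip4_sym[of r v])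

lemma refl4_Psi: "r \<in> Psi \<Longrightarrow> x \<in> Psi \<Longrightarrow> refl4 r x \<in> Psi"
proof -
  assume r: "r \<in> Psi" and x: "x \<in> Psi"
  obtain r' where r': "r' \<in> set psi_pos" "r = vec4 r' \<or> r = vneg (vec4 r')"
    using Psi_cases[OF r] by blast
  obtain x' where x': "x' \<in> set psi_pos" "x = vec4 x' \<or> x = vneg (vec4 x')"
    using Psi_cases[OF x] by blast
  have "refl4 (vec4 r') (vec4 x') = vec4 (refl4i r' x')"
    using cert_root_lengths cert_psi_refl r'(1) x'(1) by (intro refl4_vec4) fastforce+
  then have "refl4 (vec4 r') (vec4 x') \<in> Psi"
    using cert_psi_refl r'(1) x'(1) by (simp add: vec4_in_Psi)
  then show ?thesis using r'(2) x'(2) Psi_vneg by (auto simp: refl4_vneg_root refl4_vneg)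
qed

lemma W_odd: "w \<in> WF4 \<Longrightarrow> w (vneg v) = vneg (w v)"
  by (induction w arbitrary: v rule: WF4.induct) (auto simp: refl4_vneg)

lemma W_Psi: "w \<in> WF4 \<Longrightarrow> x \<in> Psi \<Longrightarrow> w x \<in> Psi"
  by (induction w arbitrary: x rule: WF4.induct) (auto simp: refl4_Psi)

lemma W_ip: "w \<in> WF4 \<Longrightarrow> ip4 (w u) (w v) = ip4 u v"
  by (induction w arbitrary: u v rule: WF4.induct) (auto simp: refl4_ip ip4_Psi_nonzero)

lemma W_comp: "w1 \<in> WF4 \<Longrightarrow> w2 \<in> WF4 \<Longrightarrow> w1 \<circ> w2 \<in> WF4"
proof (induction w1 rule: WF4.induct)
  case WF4_id then show ?case by simp
next
  case (WF4_refl w r)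
  then have "refl4 r \<circ> (w \<circ> w2) \<in> WF4" by (blast intro: WF4.WF4_refl)
  then show ?case by (simp only: comp_assoc)
qed

lemma W_refl: "r \<in> Psi \<Longrightarrow> refl4 r \<in> WF4"
  using WF4.WF4_refl[OF WF4.WF4_id] by simp

lemma W_inverse: "w \<in> WF4 \<Longrightarrow> \<exists>w'\<in>WF4. \<forall>x. w' (w x) = x"
proof (induction w rule: WF4.induct)
  case WF4_id then show ?case using WF4.WF4_id by (intro bexI[of _ id]) auto
next
  case (WF4_refl w r)
  then obtain w' where w': "w' \<in> WF4" "\<forall>x. w' (w x) = x" by blast
  have "w' \<circ> refl4 r \<in> WF4" using W_comp[OF w'(1) W_refl[OF WF4_refl(2)]] .
  moreover have "\<forall>x. (w' \<circ> refl4 r) ((refl4 r \<circ> w) x) = x"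
    using w'(2) refl4_involutive[OF ip4_Psi_nonzero[OF WF4_refl(2)]] by simp
  ultimately show ?case by blast
qed

text \<open>actFset is an action of WF4 on subsets of Psi (the sign ambiguity is harmless
  since every element of WF4 is odd).\<close>
lemma actFset_comp:
  assumes w1: "w1 \<in> WF4" and w2: "w2 \<in> WF4" and X: "X \<subseteq> Psi"
  shows "actFset (w1 \<circ> w2) X = actFset w1 (actFset w2 X)"
proof -
  have "posF (w1 (w2 b)) = posF (w1 (posF (w2 b)))" if b: "b \<in> X" for b
  proof -
    have "w1 (w2 b) \<in> Psi" using W_Psi[OF w1] W_Psi[OF w2] X b by auto
    moreover have "posF (w2 b) = w2 b \<or> posF (w2 b) = vneg (w2 b)" by (simp add: posF_def)
    ultimately show ?thesis using posF_vneg W_odd[OF w1] by auto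
  qed
  then show ?thesis unfolding actFset_def actF_def image_image by (auto intro: image_cong)
qed

lemma actFset_id: "X \<subseteq> PsiPlus \<Longrightarrow> actFset id X = X"
  by (auto simp: actFset_def actF_def posF_def)

lemma actFset_PsiPlus: "w \<in> WF4 \<Longrightarrow> X \<subseteq> Psi \<Longrightarrow> actFset w X \<subseteq> PsiPlus"
  unfolding actFset_def actF_def using posF_in_PsiPlus W_Psi by blast

lemma orbit_self: "R \<subseteq> PsiPlus \<Longrightarrow> R \<in> orbitF R"
  unfolding orbitF_def using actFset_id[of R] WF4.WF4_id by force

lemma orbit_refl_closed:
  assumes "T \<in> orbitF R" "R \<subseteq> Psi" "r \<in> Psi"
  shows "actFset (refl4 r) T \<in> orbitF R"
proof -
  obtain w where w: "w \<in> WF4" "T = actFset w R" using assms(1) unfolding orbitF_def by blast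
  have "actFset (refl4 r) T = actFset (refl4 r \<circ> w) R"
    using actFset_comp[OF W_refl[OF assms(3)] w(1) assms(2)] w(2) by simp
  then show ?thesis unfolding orbitF_def using WF4.WF4_refl[OF w(1) assms(3)] by blast
qed

lemma orbit_eq_of_mem:
  assumes R: "R \<subseteq> PsiPlus" and X: "X \<in> orbitF R"
  shows "orbitF X = orbitF R"
proof -
  have RP: "R \<subseteq> Psi" using R PsiPlus_sub_Psi by blast
  obtain w where w: "w \<in> WF4" "X = actFset w R" using X unfolding orbitF_def by blast
  have XP: "X \<subseteq> Psi" using actFset_PsiPlus[OF w(1) RP] w(2) PsiPlus_sub_Psi by blast
  obtain w' where w': "w' \<in> WF4" "\<forall>x. w' (w x) = x" using W_inverse[OF w(1)] by blast
  have undo: "actFset w' X = R"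
    using actFset_comp[OF w'(1) w(1) RP] w(2) w'(2) actFset_id[OF R]
    by (simp add: comp_def id_def)
  show ?thesis
  proof
    show "orbitF X \<subseteq> orbitF R"
    proof
      fix T assume "T \<in> orbitF X"
      then obtain v where v: "v \<in> WF4" "T = actFset v X" unfolding orbitF_def by blast
      then have "T = actFset (v \<circ> w) R" using actFset_comp[OF v(1) w(1) RP] w(2) by simp
      then show "T \<in> orbitF R" unfolding orbitF_def using W_comp[OF v(1) w(1)] by blast
    qed
    show "orbitF R \<subseteq> orbitF X"
    proof
      fix T assume "T \<in> orbitF R"
      then obtain u where u: "u \<in> WF4" "T = actFset u R" unfolding orbitF_def by blast
      then have "T = actFset (u \<circ> w') X" using actFset_comp[OF u(1) w'(1) XP] undo by simp
      then show "T \<in> orbitF X" unfolding orbitF_def using W_comp[OF u(1) w'(1)] by blast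
    qed
  qed
qed

section \<open>The root system E6 in integer coordinates\<close>

lemma PhiE_eq: "PhiE = vec6 ` set phi_all"
proof
  show "PhiE \<subseteq> vec6 ` set phi_all"
  proof
    fix x assume "x \<in> PhiE"
    then show "x \<in> vec6 ` set phi_all"
    proof (induction rule: PhiE.induct)
      case (PhiE_simple i)
      then have "unit6 i \<in> set phi_all" using cert_phi_refl by auto
      then show ?case using alphaE_vec6[OF PhiE_simple] by simp
    next
      case (PhiE_refl v i)
      then obtain u where "u \<in> set phi_all" "v = vec6 u" by blast
      moreover have "i \<in> set [1,2,3,4,5,6]" using PhiE_refl(2) by auto
      ultimately show ?case using refl6_vec6[OF PhiE_refl(2)] cert_phi_refl by auto
    qed
  qed
  have simple: "\<forall>v\<in>set (map unit6 [1,2,3,4,5,6]). vec6 v \<in> PhiE"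
    using PhiE.PhiE_simple alphaE_vec6 by (auto simp del: unit6.simps)
  have "\<forall>v\<in>set (map fst phi_chain). vec6 v \<in> PhiE"
  proof (rule chain_ok_invariant)
    show "chain_ok (\<lambda>i. i \<in> {1..6}) refl6i (map unit6 [1,2,3,4,5,6]) phi_chain"
      using cert_phi_chain by blast
    show "vec6 (refl6i i v) \<in> PhiE" if "i \<in> {1..6}" "vec6 v \<in> PhiE" for i v
      using PhiE.PhiE_refl[OF that(2,1)] refl6_vec6[OF that(1)] by simp
  qed (rule simple)
  then show "vec6 ` set phi_all \<subseteq> PhiE" using simple cert_phi_chain by blast
qed

lemma vec6_nonneg: "(\<forall>i. 0 \<le> vec6 x i) \<longleftrightarrow> nonneg6 x"
proof -
  obtain a1 a2 a3 a4 a5 a6 where x: "x = (a1,a2,a3,a4,a5,a6)" by (cases x) auto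
  show ?thesis
  proof
    assume "\<forall>i. 0 \<le> vec6 x i"
    then have "0 \<le> vec6 x 1" "0 \<le> vec6 x 2" "0 \<le> vec6 x 3" "0 \<le> vec6 x 4" "0 \<le> vec6 x 5"
      "0 \<le> vec6 x 6" by auto
    then show "nonneg6 x" by (simp add: x vec6.simps)
  qed (auto simp: x vec6.simps)
qed

lemma PhiPlus_eq: "PhiPlus = vec6 ` set phi_pos"
proof -
  have "PhiPlus = vec6 ` {x \<in> set phi_all. nonneg6 x}"
    unfolding PhiPlus_def PhiE_eq using vec6_nonneg by blast
  also have "{x \<in> set phi_all. nonneg6 x} = set phi_pos" using cert_phi_pos by (metis set_filter)
  finally show ?thesis .
qed

lemma vec6_in_PhiPlus: "vec6 v \<in> PhiPlus \<longleftrightarrow> v \<in> set phi_pos"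
  by (simp add: PhiPlus_eq inj_image_mem_iff[OF inj_vec6])

lemma vec6_adm_target:
  "(let v = vsub (vsc 2 (vec6 g)) (vadd (vsc (of_int (ip6i g g1)) (vec6 g1))
             (vadd (vsc (of_int (ip6i g g2)) (vec6 g2)) (vsc (of_int (ip6i g g3)) (vec6 g3))))
    in (if v \<in> PhiPlus then v else vneg v) \<in> B) \<longleftrightarrow> vec6 (pos6 (adm_target g g1 g2 g3)) \<in> B"
proof -
  have "vsub (vsc 2 (vec6 g)) (vadd (vsc (of_int (ip6i g g1)) (vec6 g1))
          (vadd (vsc (of_int (ip6i g g2)) (vec6 g2)) (vsc (of_int (ip6i g g3)) (vec6 g3))))
        = vec6 (adm_target g g1 g2 g3)"
    by (cases g; cases g1; cases g2; cases g3)
       (simp add: adm_target_def fun_eq_iff vec6.simps vsub_def vsc_def vadd_def)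
  then show ?thesis by (simp add: vec6_in_PhiPlus pos6_def vneg_vec6)
qed

lemma admE_bounded:
  "admE B \<longleftrightarrow> B \<subseteq> PhiPlus \<and> (\<forall>g1\<in>B. \<forall>g2\<in>B. g1 \<noteq> g2 \<longrightarrow> ipE g1 g2 = 0)
    \<and> (\<forall>g\<in>PhiE. \<forall>g1\<in>B. \<forall>g2\<in>B. \<forall>g3\<in>B.
          g1 \<noteq> g2 \<and> g1 \<noteq> g3 \<and> g2 \<noteq> g3
          \<and> ipE g g1 \<in> {1, -1} \<and> ipE g g2 \<in> {1, -1} \<and> ipE g g3 \<in> {1, -1}
          \<longrightarrow> (let v = vsub (vsc 2 g)
                       (vadd (vsc (ipE g g1) g1) (vadd (vsc (ipE g g2) g2) (vsc (ipE g g3) g3)))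
               in (if v \<in> PhiPlus then v else vneg v) \<in> B))"
  unfolding admE_def by blast

lemma adm_closed_at_iff:
  "adm_closed_at C g \<longleftrightarrow> (\<forall>g1\<in>set C. \<forall>g2\<in>set C. \<forall>g3\<in>set C.
          g1 \<noteq> g2 \<and> g1 \<noteq> g3 \<and> g2 \<noteq> g3
          \<and> ip6i g g1 \<in> {1, -1} \<and> ip6i g g2 \<in> {1, -1} \<and> ip6i g g3 \<in> {1, -1}
          \<longrightarrow> pos6 (adm_target g g1 g2 g3) \<in> set C)"
  unfolding adm_closed_at_def list_all_distinct_triples odd_partners_def set_filter by blast
lemma adm6_bounded:
  "adm6 C \<longleftrightarrow> set C \<subseteq> set phi_pos \<and> (\<forall>g1\<in>set C. \<forall>g2\<in>set C. g1 \<noteq> g2 \<longrightarrow> ip6i g1 g2 = 0)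
    \<and> (\<forall>g\<in>set phi_all. \<forall>g1\<in>set C. \<forall>g2\<in>set C. \<forall>g3\<in>set C.
          g1 \<noteq> g2 \<and> g1 \<noteq> g3 \<and> g2 \<noteq> g3
          \<and> ip6i g g1 \<in> {1, -1} \<and> ip6i g g2 \<in> {1, -1} \<and> ip6i g g3 \<in> {1, -1}
          \<longrightarrow> pos6 (adm_target g g1 g2 g3) \<in> set C)"
  unfolding adm6_def list_all_iff adm_closed_at_iff ..

lemma admE_vec6_iff: "admE (vec6 ` set C) \<longleftrightarrow> adm6 C"
proof -
  have ball_vec6: "(\<forall>x\<in>vec6 ` A. P x) \<longleftrightarrow> (\<forall>a\<in>A. P (vec6 a))" for A and P :: "vec \<Rightarrow> bool"
    by blast
  have pm1: "(of_int k :: real) \<in> {1, -1} \<longleftrightarrow> k \<in> {1, -1}" for k :: int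
    by auto
  show ?thesis
    unfolding admE_bounded adm6_bounded PhiE_eq ball_vec6 image_subset_iff
    by (simp only: ipE_vec6 vec6_eq_iff vec6_adm_target vec6_in_PhiPlus pm1
        inj_image_mem_iff[OF inj_vec6] of_int_eq_0_iff subset_eq)
qed

lemma not_adm6_of_violation:
  assumes "adm6_violation C w" shows "\<not> adm6 C"
proof
  obtain g1 g2 g3 g where w: "w = (g1,g2,g3,g)" by (cases w)
  have viol: "g1 \<in> set C" "g2 \<in> set C" "g3 \<in> set C" "g1 \<noteq> g2" "g1 \<noteq> g3" "g2 \<noteq> g3"
    "g \<in> set phi_all" "ip6i g g1 \<in> {1,-1}" "ip6i g g2 \<in> {1,-1}" "ip6i g g3 \<in> {1,-1}"
    "pos6 (adm_target g g1 g2 g3) \<notin> set C"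
    using assms unfolding adm6_violation_def w by simp_all
  assume "adm6 C"
  then have "\<forall>g\<in>set phi_all. \<forall>g1\<in>set C. \<forall>g2\<in>set C. \<forall>g3\<in>set C.
          g1 \<noteq> g2 \<and> g1 \<noteq> g3 \<and> g2 \<noteq> g3
          \<and> ip6i g g1 \<in> {1, -1} \<and> ip6i g g2 \<in> {1, -1} \<and> ip6i g g3 \<in> {1, -1}
          \<longrightarrow> pos6 (adm_target g g1 g2 g3) \<in> set C"
    unfolding adm6_bounded by blast
  then show False using viol by blast
qed

section \<open>Folding: the bijection between admissible sets of F4 and sigma-invariant ones of E6\<close>

lemma ip_fold_int: "ip4i (proj6 x) (proj6 y) = 2 * (ip6i x y + ip6i x (sigma6 y))"
  by (cases x; cases y) (simp add: algebra_simps)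

lemma ip_fold:
  "ip4 (pE (vec6 x)) (pE (vec6 y)) = (ipE (vec6 x) (vec6 y) + ipE (vec6 x) (sigmaE (vec6 y))) / 2"
  by (simp add: pE_vec6 ip4_vec4 ipE_vec6 sigmaE_vec6 ip_fold_int
      del: proj6.simps sigma6.simps ip6i.simps ip4i.simps)

lemma sigmaE_PhiPlus:
  assumes "v \<in> PhiPlus"
  shows "sigmaE v \<in> PhiPlus" "pE (sigmaE v) = pE v" "sigmaE (sigmaE v) = v"
proof -
  obtain x where x: "x \<in> set phi_pos" "v = vec6 x" using assms by (auto simp: PhiPlus_eq)
  have "sigma6 (sigma6 x) = x" by (cases x) simp
  then show "sigmaE v \<in> PhiPlus" "pE (sigmaE v) = pE v" "sigmaE (sigmaE v) = v"
    using cert_sigma x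
    by (auto simp: sigmaE_vec6 vec6_in_PhiPlus pE_vec6 simp del: proj6.simps sigma6.simps)
qed

lemma pE_fibre:
  assumes "v \<in> PhiPlus" "b \<in> PhiPlus" "pE v = pE b"
  shows "v = b \<or> v = sigmaE b"
proof -
  obtain x where x: "x \<in> set phi_pos" "v = vec6 x" using assms(1) by (auto simp: PhiPlus_eq)
  obtain y where y: "y \<in> set phi_pos" "b = vec6 y" using assms(2) by (auto simp: PhiPlus_eq)
  have "proj6 x = proj6 y" using assms(3) x y by (simp add: pE_vec6 vec4_eq_iff del: proj6.simps)
  then have "x = y \<or> x = sigma6 y" using cert_fibres x y by blast
  then show ?thesis using x y by (auto simp: sigmaE_vec6 simp del: sigma6.simps)
qed

lemma pE_PhiPlus: "v \<in> PhiPlus \<Longrightarrow> pE v \<in> PsiPlus"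
proof -
  assume "v \<in> PhiPlus"
  then obtain x where x: "x \<in> set phi_pos" "v = vec6 x" unfolding PhiPlus_eq by blast
  then have "proj6 x \<in> set psi_pos" using cert_proj_image by blast
  then show ?thesis using x(2) by (simp add: pE_vec6 vec4_in_PsiPlus del: proj6.simps)
qed

lemma pE_preimE: assumes "X \<subseteq> PsiPlus" shows "pE ` preimE X = X"
proof
  show "pE ` preimE X \<subseteq> X" unfolding preimE_def by auto
  show "X \<subseteq> pE ` preimE X"
  proof
    fix x assume x: "x \<in> X"
    then obtain u where u: "u \<in> set psi_pos" "x = vec4 u" using assms by (auto simp: PsiPlus_eq)
    then have "u \<in> proj6 ` set phi_pos" using cert_proj_image by simp
    then obtain v where v: "v \<in> set phi_pos" "proj6 v = u" by blast
    then have "vec6 v \<in> preimE X" "pE (vec6 v) = x"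
      using u x by (simp_all add: preimE_def vec6_in_PhiPlus pE_vec6 del: proj6.simps)
    then show "x \<in> pE ` preimE X" by blast
  qed
qed

lemma sigmaE_preimE: "sigmaE ` preimE X = preimE X"
proof
  show "sigmaE ` preimE X \<subseteq> preimE X"
    using sigmaE_PhiPlus unfolding preimE_def by auto
  show "preimE X \<subseteq> sigmaE ` preimE X"
  proof
    fix v assume v: "v \<in> preimE X"
    then have "v \<in> PhiPlus" "sigmaE v \<in> preimE X"
      using sigmaE_PhiPlus unfolding preimE_def by auto
    then show "v \<in> sigmaE ` preimE X" using sigmaE_PhiPlus(3) by (metis image_eqI)
  qed
qed

lemma admF_image_of_invariant:
  assumes adm: "admE B" and inv: "sigmaE ` B = B"
  shows "admF (pE ` B)" "preimE (pE ` B) = B"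
proof -
  have BP: "B \<subseteq> PhiPlus" and orth: "\<forall>g1\<in>B. \<forall>g2\<in>B. g1 \<noteq> g2 \<longrightarrow> ipE g1 g2 = 0"
    using adm unfolding admE_def by auto
  have sigB: "b \<in> B \<Longrightarrow> sigmaE b \<in> B" for b using inv by blast
  show pre: "preimE (pE ` B) = B"
  proof
    show "B \<subseteq> preimE (pE ` B)" using BP unfolding preimE_def by auto
    show "preimE (pE ` B) \<subseteq> B"
    proof
      fix v assume "v \<in> preimE (pE ` B)"
      then obtain b where b: "b \<in> B" "v \<in> PhiPlus" "pE v = pE b" unfolding preimE_def by auto
      then have "v = b \<or> v = sigmaE b" using pE_fibre BP by blast
      then show "v \<in> B" using b sigB by auto
    qed
  qed
  have "ip4 x y = 0" if x: "x \<in> pE ` B" and y: "y \<in> pE ` B" and xy: "x \<noteq> y" for x y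
  proof -
    obtain b1 b2 where b: "b1 \<in> B" "b2 \<in> B" "x = pE b1" "y = pE b2"
      using x y by auto
    have s2: "sigmaE b2 \<in> B" "pE (sigmaE b2) = pE b2"
      using sigB b(2) sigmaE_PhiPlus BP b(2) by auto
    have "b1 \<noteq> b2" "b1 \<noteq> sigmaE b2" using xy b(3,4) s2(2) by auto
    then have "ipE b1 b2 = 0" "ipE b1 (sigmaE b2) = 0" using orth b(1,2) s2(1) by auto
    moreover obtain x1 x2 where "b1 = vec6 x1" "b2 = vec6 x2"
      using BP b(1,2) unfolding PhiPlus_eq by blast
    ultimately show ?thesis using ip_fold[of x1 x2] b(3,4) by simp
  qed
  moreover have "pE ` B \<subseteq> PsiPlus" using BP pE_PhiPlus by auto
  ultimately show "admF (pE ` B)" unfolding admF_def using pre adm by simp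
qed

theorem preimE_bij:
  "bij_betw preimE {X. admF X} {B. admE B \<and> sigmaE ` B = B}"
proof (rule bij_betw_imageI)
  show "inj_on preimE {X. admF X}"
  proof (rule inj_onI)
    fix X Y assume "X \<in> {X. admF X}" "Y \<in> {X. admF X}" and eq: "preimE X = preimE Y"
    then have "X \<subseteq> PsiPlus" "Y \<subseteq> PsiPlus" unfolding admF_def by auto
    then show "X = Y" using pE_preimE eq by metis
  qed
  show "preimE ` {X. admF X} = {B. admE B \<and> sigmaE ` B = B}"
  proof
    show "preimE ` {X. admF X} \<subseteq> {B. admE B \<and> sigmaE ` B = B}"
      using sigmaE_preimE unfolding admF_def by auto
    show "{B. admE B \<and> sigmaE ` B = B} \<subseteq> preimE ` {X. admF X}"
    proof
      fix B assume "B \<in> {B. admE B \<and> sigmaE ` B = B}"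
      then have "admF (pE ` B)" "preimE (pE ` B) = B" using admF_image_of_invariant by auto
      then show "B \<in> preimE ` {X. admF X}" by force
    qed
  qed
qed

definition orthogonal4 :: "vec set \<Rightarrow> bool" where
  "orthogonal4 X \<longleftrightarrow> (\<forall>x\<in>X. \<forall>y\<in>X. x \<noteq> y \<longrightarrow> ip4 x y = 0)"

definition shapeF :: "vec set \<Rightarrow> nat \<times> nat" where
  "shapeF X = (card {x\<in>X. ip4 x x = 2}, card {x\<in>X. ip4 x x = 1})"

lemma actF_inj_on:
  assumes w: "w \<in> WF4" and X: "X \<subseteq> PsiPlus"
  shows "inj_on (actF w) X"
proof (rule inj_onI)
  fix a b assume a: "a \<in> X" and b: "b \<in> X" and eq: "actF w a = actF w b"
  have "a \<in> Psi" "b \<in> Psi" using a b X PsiPlus_sub_Psi by auto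
  then have "w a = w b \<or> w a = vneg (w b)"
    using posF_eq_iff[OF W_Psi[OF w] W_Psi[OF w]] eq by (simp add: actF_def)
  moreover obtain w' where w': "w' \<in> WF4" "\<forall>x. w' (w x) = x" using W_inverse[OF w] by blast
  ultimately have "a = b \<or> a = vneg b" using W_odd[OF w'(1)] by metis
  then show "a = b" using PsiPlus_vneg a b X by auto
qed

lemma shapeF_actFset:
  assumes w: "w \<in> WF4" and X: "X \<subseteq> PsiPlus"
  shows "shapeF (actFset w X) = shapeF X"
proof -
  have len: "ip4 (actF w x) (actF w x) = ip4 x x" for x
    by (simp add: actF_def ip4_posF_self W_ip[OF w])
  have "{y \<in> actFset w X. ip4 y y = c} = actF w ` {x \<in> X. ip4 x x = c}" for c
    unfolding actFset_def using len by auto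
  moreover have "card (actF w ` {x \<in> X. ip4 x x = c}) = card {x \<in> X. ip4 x x = c}" for c
    by (rule card_image, rule inj_on_subset[OF actF_inj_on[OF w X]]) auto
  ultimately show ?thesis unfolding shapeF_def by simp
qed

lemma orthogonal4_actFset:
  assumes w: "w \<in> WF4" and orth: "orthogonal4 X"
  shows "orthogonal4 (actFset w X)"
  unfolding orthogonal4_def actFset_def
proof (intro ballI impI)
  fix y1 y2 assume y: "y1 \<in> actF w ` X" "y2 \<in> actF w ` X" "y1 \<noteq> y2"
  then obtain x1 x2 where x: "x1 \<in> X" "x2 \<in> X" "y1 = actF w x1" "y2 = actF w x2" by blast
  then have "ip4 (w x1) (w x2) = 0" using orth y(3) W_ip[OF w] unfolding orthogonal4_def by metis
  then show "ip4 y1 y2 = 0" unfolding x actF_def using ip4_posF[of "w x1" "w x2"] by auto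
qed

lemma shapeF_vec4: "shapeF (vec4 ` set ys) = shape4 ys"
proof -
  have len: "ip4 (vec4 v) (vec4 v) = of_int k / 4 \<longleftrightarrow> ip4i v v = k" for v k
    by (simp add: ip4_vec4)
  have "{x \<in> vec4 ` set ys. ip4 x x = of_int k / 4} = vec4 ` set (filter (\<lambda>v. ip4i v v = k) ys)"
    for k unfolding set_filter using len by blast
  from this[of 8] this[of 4] show ?thesis
    unfolding shapeF_def shape4_def
    by (simp add: card_image inj_on_subset[OF inj_vec4] del: set_filter)
qed

lemma orthogonal4_vec4:
  "orthogonal4 (vec4 ` set R) \<longleftrightarrow> (\<forall>u\<in>set R. \<forall>v\<in>set R. u \<noteq> v \<longrightarrow> ip4i u v = 0)"
  by (auto simp: orthogonal4_def ip4_vec4 vec4_eq_iff)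

lemma orth_lists_complete:
  "T \<subseteq> set xs \<Longrightarrow> (\<forall>a\<in>T. \<forall>b\<in>T. a \<noteq> b \<longrightarrow> ip4i a b = 0) \<Longrightarrow> \<exists>ys\<in>set (orth_lists xs). set ys = T"
proof (induction xs arbitrary: T rule: orth_lists.induct)
  case 1 then show ?case by auto
next
  case (2 x xs)
  show ?case
  proof (cases "x \<in> T")
    case False
    then show ?thesis using "2.IH"(1)[of T] "2.prems" by auto
  next
    case True
    have "T - {x} \<subseteq> set (filter (\<lambda>y. ip4i x y = 0) xs)" using "2.prems" True by auto
    then obtain ys where "ys \<in> set (orth_lists (filter (\<lambda>y. ip4i x y = 0) xs))" "set ys = T - {x}"
      using "2.IH"(2)[of "T - {x}"] "2.prems"(2) by blast
    then show ?thesis using True by (intro bexI[of _ "x # ys"]) auto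
  qed
qed

lemma orthogonal_as_orth_list:
  assumes X: "X \<subseteq> PsiPlus" and orth: "orthogonal4 X"
  shows "\<exists>ys\<in>set (orth_lists psi_pos). X = vec4 ` set ys"
proof -
  define T where "T = {v \<in> set psi_pos. vec4 v \<in> X}"
  have X_eq: "X = vec4 ` T" using X unfolding T_def PsiPlus_eq by auto
  have "ip4i a b = 0" if "a \<in> T" "b \<in> T" "a \<noteq> b" for a b
  proof -
    have "vec4 a \<noteq> vec4 b" using that(3) by (simp add: vec4_eq_iff)
    then have "ip4 (vec4 a) (vec4 b) = 0" using orth that(1,2) unfolding orthogonal4_def T_def by blast
    then show ?thesis by (simp add: ip4_vec4)
  qed
  then obtain ys where "ys \<in> set (orth_lists psi_pos)" "set ys = T"
    using orth_lists_complete[of T psi_pos] unfolding T_def by blast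
  then show ?thesis using X_eq by blast
qed

section \<open>The six orbits\<close>

definition class_sets :: "v4 list \<times> (v4 list \<times> v4 \<times> v4 list) list \<Rightarrow> vec set set" where
  "class_sets cl = (\<lambda>U. vec4 ` set U) ` set (class_members cl)"

lemma class_sets_image: "class_sets cl = (`) vec4 ` set (map set (class_members cl))"
  by (simp add: class_sets_def image_image)

lemma class_sets_of_shape:
  assumes cl: "cl \<in> set orbit_classes" and X: "X \<subseteq> PsiPlus" "orthogonal4 X"
    and shape: "shapeF X = shape4 (fst cl)"
  shows "X \<in> class_sets cl"
proof -
  obtain ys where ys: "ys \<in> set (orth_lists psi_pos)" "X = vec4 ` set ys"
    using orthogonal_as_orth_list[OF X] by blast
  then have "set ys \<in> set (map set (class_members cl))"
    using cert_shape_classes cl shape shapeF_vec4 by auto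
  then show ?thesis unfolding class_sets_def ys(2) by auto
qed

lemma pos4_refl4i_psi_pos: "r \<in> set psi_pos \<Longrightarrow> u \<in> set psi_pos \<Longrightarrow> pos4 (refl4i r u) \<in> set psi_pos"
  using cert_psi_refl cert_pos4 by blast

lemma actFset_refl_vec4:
  assumes r: "r \<in> set psi_pos" and U: "set U \<subseteq> set psi_pos"
  shows "actFset (refl4 (vec4 r)) (vec4 ` set U) = vec4 ` set (map (pos4 \<circ> refl4i r) U)"
proof -
  have "posF (refl4 (vec4 r) (vec4 u)) = vec4 (pos4 (refl4i r u))" if "u \<in> set U" for u
    using that U r cert_root_lengths cert_psi_refl
    by (subst refl4_vec4) (fastforce simp: posF_vec4)+
  then show ?thesis unfolding actFset_def actF_def by (auto simp: image_image)
qed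

lemma rep_in_PsiPlus:
  assumes "R \<in> set orbit_reps"
  shows "vec4 ` set R \<subseteq> PsiPlus" "orthogonal4 (vec4 ` set R)"
proof -
  have "set R \<subseteq> set psi_pos" "\<forall>u\<in>set R. \<forall>v\<in>set R. u \<noteq> v \<longrightarrow> ip4i u v = 0"
    using cert_reps assms by blast+
  then show "vec4 ` set R \<subseteq> PsiPlus" "orthogonal4 (vec4 ` set R)"
    unfolding PsiPlus_eq orthogonal4_vec4 by blast+
qed

lemma fst_class_rep: "cl \<in> set orbit_classes \<Longrightarrow> fst cl \<in> set orbit_reps"
  unfolding cert_class_reps[symmetric] by simp

text \<open>By invariance of orthogonality and shape, the orbit of a representative lies in its class.\<close>
lemma orbit_subset_class:
  assumes cl: "cl \<in> set orbit_classes"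
  shows "orbitF (vec4 ` set (fst cl)) \<subseteq> class_sets cl"
proof
  note R = rep_in_PsiPlus[OF fst_class_rep[OF cl]]
  have R_Psi: "vec4 ` set (fst cl) \<subseteq> Psi" using R(1) PsiPlus_sub_Psi by blast
  fix T assume "T \<in> orbitF (vec4 ` set (fst cl))"
  then obtain w where w: "w \<in> WF4" "T = actFset w (vec4 ` set (fst cl))"
    unfolding orbitF_def by blast
  have "T \<subseteq> PsiPlus" "orthogonal4 T" "shapeF T = shape4 (fst cl)"
    using actFset_PsiPlus[OF w(1) R_Psi] orthogonal4_actFset[OF w(1) R(2)]
      shapeF_actFset[OF w(1) R(1)] shapeF_vec4 w(2) by simp_all
  then show "T \<in> class_sets cl" using class_sets_of_shape[OF cl] by blast
qed

text \<open>Following the chain, every member of a class lies in the orbit of the representative.\<close>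
lemma class_subset_orbit:
  assumes cl: "cl \<in> set orbit_classes"
  shows "class_sets cl \<subseteq> orbitF (vec4 ` set (fst cl))"
proof -
  note R = rep_in_PsiPlus[OF fst_class_rep[OF cl]]
  have R_Psi: "vec4 ` set (fst cl) \<subseteq> Psi" using R(1) PsiPlus_sub_Psi by blast
  let ?P = "\<lambda>U. set U \<subseteq> set psi_pos \<and> vec4 ` set U \<in> orbitF (vec4 ` set (fst cl))"
  have start: "?P (fst cl)"
    using fst_class_rep[OF cl] cert_reps orbit_self[OF R(1)] by auto
  have "\<forall>U\<in>set (map fst (snd cl)). ?P U"
  proof (rule chain_ok_invariant)
    show "chain_ok (\<lambda>r. r \<in> set psi_pos) (\<lambda>r U. map (pos4 \<circ> refl4i r) U) [fst cl] (snd cl)"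
      using cert_chains cl by blast
    show "\<forall>U\<in>set [fst cl]. ?P U" using start by simp
    show "?P (map (pos4 \<circ> refl4i r) U)" if r: "r \<in> set psi_pos" and P: "?P U" for r U
    proof -
      have "vec4 r \<in> Psi" using r PsiPlus_sub_Psi by (auto simp: vec4_in_PsiPlus[symmetric])
      then have "actFset (refl4 (vec4 r)) (vec4 ` set U) \<in> orbitF (vec4 ` set (fst cl))"
        using orbit_refl_closed P R_Psi by blast
      then show ?thesis using P pos4_refl4i_psi_pos[OF r] actFset_refl_vec4[OF r] by auto
    qed
  qed
  then show ?thesis using start unfolding class_sets_def class_members_def by auto
qed

lemma orbit_class: "cl \<in> set orbit_classes \<Longrightarrow> orbitF (vec4 ` set (fst cl)) = class_sets cl"
  using orbit_subset_class class_subset_orbit by blast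

lemma preimE_vec4: "preimE (vec4 ` set ys) = vec6 ` set (preim6 ys)"
proof -
  have "preimE (vec4 ` set ys) = vec6 ` {u \<in> set phi_pos. pE (vec6 u) \<in> vec4 ` set ys}"
    unfolding preimE_def PhiPlus_eq by blast
  then show ?thesis
    by (simp add: preim6_def pE_vec6 inj_image_mem_iff[OF inj_vec4] del: proj6.simps)
qed

lemma admF_iff: "admF X \<longleftrightarrow> X \<subseteq> PsiPlus \<and> orthogonal4 X \<and> admE (preimE X)"
  by (simp add: admF_def orthogonal4_def)

lemma admF_vec4_rep:
  assumes "R \<in> set orbit_reps" shows "admF (vec4 ` set R)"
proof -
  have "adm6 (preim6 R)" using cert_reps assms by blast
  then show ?thesis
    unfolding admF_iff preimE_vec4 admE_vec6_iff using rep_in_PsiPlus[OF assms] by blast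
qed

lemma admF_shape:
  assumes adm: "admF X"
  shows "\<exists>R\<in>set orbit_reps. shapeF X = shape4 R"
proof -
  have X: "X \<subseteq> PsiPlus" "orthogonal4 X" "admE (preimE X)" using adm unfolding admF_iff by blast+
  obtain ys where ys: "ys \<in> set (orth_lists psi_pos)" "X = vec4 ` set ys"
    using orthogonal_as_orth_list[OF X(1,2)] by blast
  obtain i where i: "i < length (orth_lists psi_pos)" "orth_lists psi_pos ! i = ys"
    using ys(1) by (auto simp: in_set_conv_nth)
  have "adm6 (preim6 ys)" using X(3) ys(2) by (simp add: preimE_vec4 admE_vec6_iff)
  moreover have "case witnesses ! i of
      None \<Rightarrow> (\<exists>cl\<in>set orbit_classes. shape4 ys = shape4 (fst cl))
    | Some w \<Rightarrow> adm6_violation (preim6 ys) w"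
    using cert_classification i(1) unfolding list_all2_conv_all_nth i(2)[symmetric] by blast
  ultimately have "\<exists>cl\<in>set orbit_classes. shape4 ys = shape4 (fst cl)"
    using not_adm6_of_violation by (cases "witnesses ! i") auto
  then show ?thesis using ys(2) shapeF_vec4 unfolding cert_class_reps[symmetric] by auto
qed

lemma orbit_reps_repr:
  "map (\<lambda>R. vec4 ` set R) orbit_reps = [reprI, reprII, reprIII, reprIV, reprV, reprVI]"
proof -
  have half: "vsc (1/2) (vec4 (2, -2, -2, -2)) = vec4 (1, -1, -1, -1)"
    by (simp add: fun_eq_iff vsc_def vec4.simps)
  have eps1: "eps (Suc 0) = vec4 (2,0,0,0)" using eps_vec4(1) by simp
  show ?thesis
    by (simp add: orbit_reps_def reprI_def reprII_def reprIII_def reprIV_def reprV_def reprVI_def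
        eps_vec4 eps1 vsub_vec4 vadd_vec4 posF_vec4 half pos4_def psi_pos_def)
qed

lemma orbit_reps_orbits:
  "map (\<lambda>R. orbitF (vec4 ` set R)) orbit_reps = map class_sets orbit_classes"
  unfolding cert_class_reps[symmetric] map_map by (rule map_cong) (simp_all add: orbit_class)

lemma admF_orbits:
  "{orbitF X | X. admF X} = (\<lambda>R. orbitF (vec4 ` set R)) ` set orbit_reps"
proof
  show "{orbitF X | X. admF X} \<subseteq> (\<lambda>R. orbitF (vec4 ` set R)) ` set orbit_reps"
  proof
    fix Orb assume "Orb \<in> {orbitF X | X. admF X}"
    then obtain X where X: "admF X" "Orb = orbitF X" by blast
    obtain R where R: "R \<in> set orbit_reps" "shapeF X = shape4 R" using admF_shape[OF X(1)] by blast
    obtain cl where cl: "cl \<in> set orbit_classes" "fst cl = R"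
      using R(1) unfolding cert_class_reps[symmetric] by auto
    have "X \<subseteq> PsiPlus" "orthogonal4 X" using X(1) unfolding admF_iff by blast+
    then have "X \<in> orbitF (vec4 ` set R)"
      using class_sets_of_shape[OF cl(1)] R(2) orbit_class[OF cl(1)] cl(2) by simp
    moreover have "vec4 ` set R \<subseteq> PsiPlus" using admF_vec4_rep[OF R(1)] by (simp add: admF_def)
    ultimately have "Orb = orbitF (vec4 ` set R)" using orbit_eq_of_mem X(2) by blast
    then show "Orb \<in> (\<lambda>R. orbitF (vec4 ` set R)) ` set orbit_reps" using R(1) by blast
  qed
  show "(\<lambda>R. orbitF (vec4 ` set R)) ` set orbit_reps \<subseteq> {orbitF X | X. admF X}"
    using admF_vec4_rep by blast
qed

lemma inj_image_vec4: "inj ((`) vec4)"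
  using inj_vec4 by (auto simp: inj_def inj_image_eq_iff)

lemma class_sets_card: "card (class_sets cl) = card (set (map set (class_members cl)))"
  unfolding class_sets_image by (rule card_image) (rule inj_on_subset[OF inj_image_vec4], simp)

lemma orbit_sizes:
  "map card [orbitF reprI, orbitF reprII, orbitF reprIII, orbitF reprIV, orbitF reprV, orbitF reprVI]
     = [1, 12, 12, 18, 36, 3]"
  and orbit_count:
  "card (set [orbitF reprI, orbitF reprII, orbitF reprIII, orbitF reprIV, orbitF reprV, orbitF reprVI]) = 6"
proof -
  have "[orbitF reprI, orbitF reprII, orbitF reprIII, orbitF reprIV, orbitF reprV, orbitF reprVI]
      = map orbitF (map (\<lambda>R. vec4 ` set R) orbit_reps)"
    unfolding orbit_reps_repr by simp
  also have "\<dots> = map class_sets orbit_classes" using orbit_reps_orbits by (simp add: comp_def)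
  finally have orbits: "[orbitF reprI, orbitF reprII, orbitF reprIII, orbitF reprIV, orbitF reprV,
      orbitF reprVI] = map class_sets orbit_classes" .
  show "map card [orbitF reprI, orbitF reprII, orbitF reprIII, orbitF reprIV, orbitF reprV, orbitF reprVI]
     = [1, 12, 12, 18, 36, 3]"
    unfolding orbits using cert_class_sizes by (simp add: class_sets_card comp_def)
  have "inj ((`) ((`) vec4))" using inj_image_vec4 by (auto simp: inj_def inj_image_eq_iff)
  moreover have "set (map class_sets orbit_classes)
      = (`) ((`) vec4) ` set (map (\<lambda>cl. set (map set (class_members cl))) orbit_classes)"
    by (simp add: class_sets_image image_image)
  ultimately have "card (set (map class_sets orbit_classes))
      = card (set (map (\<lambda>cl. set (map set (class_members cl))) orbit_classes))"
    by (simp add: card_image inj_on_subset)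
  then show "card (set [orbitF reprI, orbitF reprII, orbitF reprIII, orbitF reprIV, orbitF reprV, orbitF reprVI]) = 6"
    unfolding orbits using cert_class_sizes by simp
qed

theorem proposition3p2:
  shows "bij_betw preimE {X. admF X} {B. admE B \<and> sigmaE ` B = B}
    \<and> {orbitF X | X. admF X} =
           {orbitF reprI, orbitF reprII, orbitF reprIII, orbitF reprIV, orbitF reprV, orbitF reprVI}
    \<and> card {orbitF reprI, orbitF reprII, orbitF reprIII, orbitF reprIV, orbitF reprV, orbitF reprVI} = 6
    \<and> admF reprI \<and> admF reprII \<and> admF reprIII \<and> admF reprIV \<and> admF reprV \<and> admF reprVI
    \<and> card (orbitF reprI) = 1 \<and> card (orbitF reprII) = 12 \<and> card (orbitF reprIII) = 12
         \<and> card (orbitF reprIV) = 18 \<and> card (orbitF reprV) = 36 \<and> card (orbitF reprVI) = 3"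
proof -
  have reps: "set [reprI, reprII, reprIII, reprIV, reprV, reprVI] = (\<lambda>R. vec4 ` set R) ` set orbit_reps"
    using orbit_reps_repr by (metis set_map)
  have "list_all admF [reprI, reprII, reprIII, reprIV, reprV, reprVI]"
    unfolding list_all_iff reps using admF_vec4_rep by blast
  moreover have "{orbitF X | X. admF X} = orbitF ` set [reprI, reprII, reprIII, reprIV, reprV, reprVI]"
    unfolding admF_orbits reps image_image ..
  ultimately show ?thesis using preimE_bij orbit_sizes orbit_count by simp
qed

end
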